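(* In the 2SDI setting where Alice measures the qubit observables $A_0=\sigma_x$, $A_1=\sigma_y$ and Bob and Charlie are black boxes, the Mermin family $P^V_{MF}$ ($0<V\le1$) demonstrates genuine tripartite steering if and only if $V>\frac1{\sqrt2}$.
   Context: Outcomes and settings: $a,b,c,x,y,z\in\{0,1\}$. For a qubit observable $O$ with eigenvalues $\pm1$, the measurement has projectors $M_0=(\mathbb 1+O)/2$, $M_1=(\mathbb 1-O)/2$; $M^A_{a|x}$ denotes the projectors of $A_x$. Mermin family: $P^V_{MF}(abc|xyz)=\frac{1+(-1)^{a\oplus b\oplus c\oplus xy\oplus yz\oplus xz}\,\delta_{x\oplus y\oplus1,z}\,V}{8}$. Genuine tripartite steering in the 2SDI scenario: $P$ demonstrates it iff there is no finite $d$, biseparable state $\rho^{ABC}=\sum_\lambda p_\lambda\rho^\lambda_A\otimes\rho^\lambda_{BC}+\sum_\lambda q_\lambda\rho^\lambda_{AC}\otimes\rho^\lambda_B+\sum_\lambda r_\lambda\rho^\lambda_{AB}\otimes\rho^\lambda_C$ on $\mathbb C^2\otimes\mathbb C^d\otimes\mathbb C^d$ (weights nonnegative summing to 1), and POVMs $\{N_{b|y}\}_b$, $\{N'_{c|z}\}_c$ on $\mathbb C^d$ such that $P(abc|xyz)=\mathrm{Tr}[(M^A_{a|x}\otimes N_{b|y}\otimes N'_{c|z})\rho^{ABC}]$. *)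

theory Defs
  imports "HOL-Analysis.Analysis"
begin

text \<open>Operators on a finite-dimensional Hilbert space with orthonormal basis indexed
  by a finite set I are represented by their matrix entries M i j (i, j in I);
  entries outside I are irrelevant.  Bits (outcomes and settings) are naturals in {0,1}.\<close>

type_synonym 'i op = "'i \<Rightarrow> 'i \<Rightarrow> complex"

definition qform :: "'i set \<Rightarrow> 'i op \<Rightarrow> ('i \<Rightarrow> complex) \<Rightarrow> complex" where
  "qform I M v = (\<Sum>i\<in>I. \<Sum>j\<in>I. cnj (v i) * M i j * v j)"

definition psd_on :: "'i set \<Rightarrow> 'i op \<Rightarrow> bool" where
  "psd_on I M \<longleftrightarrow> (\<forall>v. Im (qform I M v) = 0 \<and> 0 \<le> Re (qform I M v))"

definition trace_on :: "'i set \<Rightarrow> 'i op \<Rightarrow> complex" where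
  "trace_on I M = (\<Sum>i\<in>I. M i i)"

definition state_on :: "'i set \<Rightarrow> 'i op \<Rightarrow> bool" where
  "state_on I \<rho> \<longleftrightarrow> psd_on I \<rho> \<and> trace_on I \<rho> = 1"

definition povm2_on :: "'i set \<Rightarrow> (nat \<Rightarrow> 'i op) \<Rightarrow> bool" where
  "povm2_on I N \<longleftrightarrow> psd_on I (N 0) \<and> psd_on I (N 1) \<and>
     (\<forall>i\<in>I. \<forall>j\<in>I. N 0 i j + N 1 i j = (if i = j then 1 else 0))"

definition qubit :: "nat set" where "qubit = {0..<2}"

definition sigma_x :: "nat op" where
  "sigma_x i j = (if i \<noteq> j then 1 else 0)"

definition sigma_y :: "nat op" where
  "sigma_y i j = (if i = 0 \<and> j = 1 then - \<i> else if i = 1 \<and> j = 0 then \<i> else 0)"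

definition alice_obs :: "nat \<Rightarrow> nat op" where
  "alice_obs x = (if x = 0 then sigma_x else sigma_y)"

definition alice_proj :: "nat \<Rightarrow> nat \<Rightarrow> nat op" where
  "alice_proj x a i j = ((if i = j then 1 else 0) + (-1) ^ a * alice_obs x i j) / 2"

text \<open>Mermin family P^V_MF(abc|xyz); XOR of bits = parity of the sum.\<close>
definition mermin :: "real \<Rightarrow> nat \<Rightarrow> nat \<Rightarrow> nat \<Rightarrow> nat \<Rightarrow> nat \<Rightarrow> nat \<Rightarrow> real" where
  "mermin V a b c x y z =
     (1 + (-1) ^ (a + b + c + x * y + y * z + x * z)
          * (if (x + y + 1) mod 2 = z then 1 else 0) * V) / 8"

definition tri_index :: "nat \<Rightarrow> (nat \<times> nat \<times> nat) set" where
  "tri_index d = qubit \<times> {0..<d} \<times> {0..<d}"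

definition biseparable :: "nat \<Rightarrow> (nat \<times> nat \<times> nat) op \<Rightarrow> bool" where
  "biseparable d \<rho> \<longleftrightarrow>
    (\<exists>(n::nat) (p::nat \<Rightarrow> real) (q::nat \<Rightarrow> real) (r::nat \<Rightarrow> real)
       (\<rho>A :: nat \<Rightarrow> nat op) (\<rho>BC :: nat \<Rightarrow> (nat \<times> nat) op)
       (\<rho>AC :: nat \<Rightarrow> (nat \<times> nat) op) (\<rho>B :: nat \<Rightarrow> nat op)
       (\<rho>AB :: nat \<Rightarrow> (nat \<times> nat) op) (\<rho>C :: nat \<Rightarrow> nat op).
       (\<forall>l<n. 0 \<le> p l \<and> 0 \<le> q l \<and> 0 \<le> r l) \<and>
       (\<Sum>l<n. p l + q l + r l) = 1 \<and>
       (\<forall>l<n. state_on qubit (\<rho>A l) \<and> state_on ({0..<d} \<times> {0..<d}) (\<rho>BC l) \<and>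
              state_on (qubit \<times> {0..<d}) (\<rho>AC l) \<and> state_on {0..<d} (\<rho>B l) \<and>
              state_on (qubit \<times> {0..<d}) (\<rho>AB l) \<and> state_on {0..<d} (\<rho>C l)) \<and>
       (\<forall>(a, b, c) \<in> tri_index d. \<forall>(a', b', c') \<in> tri_index d.
          \<rho> (a, b, c) (a', b', c') =
            (\<Sum>l<n. of_real (p l) * \<rho>A l a a' * \<rho>BC l (b, c) (b', c')
                  + of_real (q l) * \<rho>AC l (a, c) (a', c') * \<rho>B l b b'
                  + of_real (r l) * \<rho>AB l (a, b) (a', b') * \<rho>C l c c')))"

text \<open>Tr[(M^A_{a|x} (x) N_{b|y} (x) N'_{c|z}) rho].\<close>
definition tri_prob :: "nat \<Rightarrow> (nat \<times> nat \<times> nat) op \<Rightarrow> nat op \<Rightarrow> nat op \<Rightarrow> nat op \<Rightarrow> complex" where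
  "tri_prob d \<rho> MA NB NC =
     (\<Sum>(a, b, c) \<in> tri_index d. \<Sum>(a', b', c') \<in> tri_index d.
        MA a a' * NB b b' * NC c c' * \<rho> (a', b', c') (a, b, c))"

definition genuine_tripartite_steering_2SDI ::
  "(nat \<Rightarrow> nat \<Rightarrow> nat \<Rightarrow> nat \<Rightarrow> nat \<Rightarrow> nat \<Rightarrow> real) \<Rightarrow> bool" where
  "genuine_tripartite_steering_2SDI P \<longleftrightarrow>
     \<not> (\<exists>(d::nat) \<rho> (N :: nat \<Rightarrow> nat \<Rightarrow> nat op) (N' :: nat \<Rightarrow> nat \<Rightarrow> nat op).
          1 \<le> d \<and> biseparable d \<rho> \<and>
          (\<forall>y\<in>{0,1}. povm2_on {0..<d} (N y)) \<and>
          (\<forall>z\<in>{0,1}. povm2_on {0..<d} (N' z)) \<and>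
          (\<forall>a\<in>{0,1}. \<forall>b\<in>{0,1}. \<forall>c\<in>{0,1}. \<forall>x\<in>{0,1}. \<forall>y\<in>{0,1}. \<forall>z\<in>{0,1}.
             complex_of_real (P a b c x y z) =
               tri_prob d \<rho> (alice_proj x a) (N y b) (N' z c)))"

end

theory Submission
  imports Defs
begin

text \<open>The Mermin combination \<open>E\<^sub>0\<^sub>0\<^sub>1 + E\<^sub>0\<^sub>1\<^sub>0 + E\<^sub>1\<^sub>0\<^sub>0 - E\<^sub>1\<^sub>1\<^sub>1\<close> of the full correlators
  \<open>E\<^sub>x\<^sub>y\<^sub>z = \<langle>A\<^sub>x \<otimes> B\<^sub>y \<otimes> C\<^sub>z\<rangle>\<close> equals \<open>4 V\<close> for \<open>P\<^sup>V\<^sub>M\<^sub>F\<close>. For a biseparable state the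
  correlators factor over the components. On an \<open>A|BC\<close> component the combination is
  \<open>\<langle>A\<^sub>0\<rangle>(\<langle>B\<^sub>0C\<^sub>1\<rangle> + \<langle>B\<^sub>1C\<^sub>0\<rangle>) + \<langle>A\<^sub>1\<rangle>(\<langle>B\<^sub>0C\<^sub>0\<rangle> - \<langle>B\<^sub>1C\<^sub>1\<rangle>) \<le> 2 max\<^bsub>|s|,|t|\<le>1\<^esub> \<langle>s \<sigma>\<^sub>x + t \<sigma>\<^sub>y\<rangle> \<le> 2\<surd>2\<close>;
  on an \<open>AB|C\<close> (or \<open>AC|B\<close>) component, with Charlie's correlators \<open>k\<^sub>0, k\<^sub>1 \<in> [-1, 1]\<close>, it is
  \<open>\<langle>\<sigma>\<^sub>x \<otimes> (k\<^sub>1 B\<^sub>0 + k\<^sub>0 B\<^sub>1) + \<sigma>\<^sub>y \<otimes> (k\<^sub>0 B\<^sub>0 - k\<^sub>1 B\<^sub>1)\<rangle> \<le> 2\<surd>2\<close>, which follows from \<open>-1 \<le> B\<^sub>y \<le> 1\<close>.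
  Hence \<open>4 V \<le> 2\<surd>2\<close>. All these bounds are checked on pure states and extended to mixed ones
  through a Cholesky decomposition \<open>\<rho> = \<Sum>\<^sub>k v\<^sub>k v\<^sub>k\<^sup>*\<close>.

  Conversely, for \<open>V \<le> 1/\<surd>2\<close>, \<open>P\<^sup>V\<^sub>M\<^sub>F\<close> is a mixture of white noise, an \<open>A|BC\<close> state of weight
  \<open>1 - \<surd>2 V\<close>, and an \<open>AB|C\<close> model of weight \<open>\<surd>2 V\<close> in which Charlie reads two uniformly random
  classical bits and Alice and Bob share a state, depending on these bits, with correlators \<open>\<plusminus>1/\<surd>2\<close>.\<close>

definition sesq :: "'i set \<Rightarrow> 'i op \<Rightarrow> ('i \<Rightarrow> complex) \<Rightarrow> ('i \<Rightarrow> complex) \<Rightarrow> complex" where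
  "sesq I M u w = (\<Sum>i\<in>I. \<Sum>j\<in>I. cnj (u i) * M i j * w j)"

definition sqnorm :: "'i set \<Rightarrow> ('i \<Rightarrow> complex) \<Rightarrow> real" where
  "sqnorm I v = (\<Sum>i\<in>I. (cmod (v i))\<^sup>2)"

definition expect :: "'i set \<Rightarrow> 'i op \<Rightarrow> 'i op \<Rightarrow> complex" where
  "expect I T \<rho> = (\<Sum>i\<in>I. \<Sum>j\<in>I. T i j * \<rho> j i)"

definition rank1 :: "('i \<Rightarrow> complex) \<Rightarrow> 'i op" where
  "rank1 u = (\<lambda>i j. u i * cnj (u j))"

definition tensor :: "'a op \<Rightarrow> 'b op \<Rightarrow> ('a \<times> 'b) op" where
  "tensor A B = (\<lambda>(i, j) (i', j'). A i i' * B j j')"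

lemma qform_eq_sesq: "qform I M v = sesq I M v v"
  by (simp add: qform_def sesq_def)

lemma cnj_mult_self: "cnj z * z = complex_of_real ((cmod z)\<^sup>2)"
  using complex_norm_square[of z] by (simp add: mult.commute)

lemma sqnorm_nonneg: "0 \<le> sqnorm I v"
  unfolding sqnorm_def by (simp add: sum_nonneg)

lemma qform_cong: "(\<And>k. k \<in> I \<Longrightarrow> v k = w k) \<Longrightarrow> qform I M v = qform I M w"
  unfolding qform_def by (intro sum.cong refl) auto

lemma qform_cong_op: "(\<And>i j. i \<in> I \<Longrightarrow> j \<in> I \<Longrightarrow> A i j = B i j) \<Longrightarrow> qform I A v = qform I B v"
  unfolding qform_def by (intro sum.cong refl) auto

lemma qform_add: "qform I (\<lambda>i j. A i j + B i j) v = qform I A v + qform I B v"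
  unfolding qform_def by (simp add: sum.distrib[symmetric] algebra_simps)

lemma qform_scale: "qform I (\<lambda>i j. c * A i j) v = c * qform I A v"
  unfolding qform_def by (simp add: sum_distrib_left mult_ac)

lemma qform_supported:
  assumes "finite I" "S \<subseteq> I" "\<And>k. k \<in> I \<Longrightarrow> k \<notin> S \<Longrightarrow> v k = 0"
  shows "qform I M v = qform S M v"
proof -
  have "qform I M v = (\<Sum>i\<in>I. \<Sum>j\<in>S. cnj (v i) * M i j * v j)"
    unfolding qform_def
    by (rule sum.cong[OF refl], rule sum.mono_neutral_right)
      (use assms finite_subset[OF assms(2,1)] in auto)
  also have "\<dots> = (\<Sum>i\<in>S. \<Sum>j\<in>S. cnj (v i) * M i j * v j)"
    by (rule sum.mono_neutral_right) (use assms in \<open>auto intro!: sum.neutral\<close>)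
  finally show ?thesis by (simp add: qform_def)
qed

lemma qform_two_point:
  assumes "finite I" "i \<in> I" "j \<in> I" "i \<noteq> j"
  shows "qform I M (\<lambda>k. if k = i then a else if k = j then b else 0) =
     cnj a * M i i * a + cnj a * M i j * b + cnj b * M j i * a + cnj b * M j j * b"
proof -
  have "qform I M (\<lambda>k. if k = i then a else if k = j then b else 0)
     = qform {i, j} M (\<lambda>k. if k = i then a else if k = j then b else 0)"
    by (rule qform_supported) (use assms in auto)
  then show ?thesis using assms(4) by (simp add: qform_def)
qed

lemma qform_insert:
  assumes "finite F" "x \<notin> F"
  shows "qform (insert x F) M w = cnj (w x) * M x x * w x + (\<Sum>j\<in>F. cnj (w x) * M x j * w j)
      + (\<Sum>i\<in>F. cnj (w i) * M i x * w x) + qform F M w"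
  using assms by (simp add: qform_def sum.distrib)

lemma qform_identity:
  assumes "finite I"
  shows "qform I (\<lambda>i j. if i = j then 1 else 0) v = complex_of_real (sqnorm I v)"
proof -
  have "qform I (\<lambda>i j. if i = j then 1 else 0) v = (\<Sum>i\<in>I. cnj (v i) * v i)"
    unfolding qform_def using assms
    by (intro sum.cong refl) (simp add: if_distrib if_distribR cong: if_cong)
  then show ?thesis
    unfolding sqnorm_def by (simp add: cnj_mult_self del: of_real_power)
qed

lemma qform_rank1: "qform I (rank1 u) v = (\<Sum>i\<in>I. cnj (v i) * u i) * cnj (\<Sum>i\<in>I. cnj (v i) * u i)"
  unfolding qform_def rank1_def by (simp add: sum_product mult_ac)

lemma expect_rank1: "expect I T (rank1 u) = qform I T u"
  unfolding expect_def rank1_def qform_def by (simp add: mult_ac)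

lemma trace_rank1: "trace_on I (rank1 u) = complex_of_real (sqnorm I u)"
  unfolding trace_on_def rank1_def sqnorm_def by (simp add: complex_norm_square del: of_real_power)

section \<open>Positive semidefinite operators\<close>

lemma psd_on_diag:
  assumes "psd_on I M" "finite I" "i \<in> I"
  shows "Im (M i i) = 0" "0 \<le> Re (M i i)"
proof -
  let ?v = "\<lambda>k. if k = i then 1 else 0 :: complex"
  have "qform I M ?v = qform {i} M ?v" by (rule qform_supported) (use assms in auto)
  also have "\<dots> = M i i" by (simp add: qform_def)
  finally show "Im (M i i) = 0" "0 \<le> Re (M i i)" using assms(1) unfolding psd_on_def by metis+
qed

lemma psd_on_hermitian:
  assumes "psd_on I M" "finite I" "i \<in> I" "j \<in> I"
  shows "M j i = cnj (M i j)"
proof (cases "i = j")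
  case True
  then show ?thesis using psd_on_diag[OF assms(1-3)] by (simp add: complex_eq_iff)
next
  case False
  have real_diag: "Im (M i i) = 0" "Im (M j j) = 0"
    using psd_on_diag(1)[OF assms(1,2)] assms(3,4) by auto
  have "Im (qform I M (\<lambda>k. if k = i then 1 else if k = j then 1 else 0)) = 0"
    "Im (qform I M (\<lambda>k. if k = i then 1 else if k = j then \<i> else 0)) = 0"
    using assms(1) unfolding psd_on_def by blast+
  then have "Im (M i j) + Im (M j i) = 0" "Re (M i j) - Re (M j i) = 0"
    unfolding qform_two_point[OF assms(2-4) False] using real_diag by simp_all
  then show ?thesis by (simp add: complex_eq_iff)
qed

lemma psd_on_remove:
  assumes "psd_on (insert x F) M" "finite F" "x \<notin> F"
  shows "psd_on F M"
  unfolding psd_on_def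
proof
  fix v
  have "qform (insert x F) M (v(x := 0)) = qform F M (v(x := 0))"
    by (rule qform_supported) (use assms in auto)
  also have "\<dots> = qform F M v" by (rule qform_cong) (use assms in auto)
  finally show "Im (qform F M v) = 0 \<and> 0 \<le> Re (qform F M v)"
    using assms(1) unfolding psd_on_def by metis
qed

lemma psd_on_add: "psd_on I A \<Longrightarrow> psd_on I B \<Longrightarrow> psd_on I (\<lambda>i j. A i j + B i j)"
  unfolding psd_on_def qform_add by simp

lemma psd_on_scale: "psd_on I A \<Longrightarrow> 0 \<le> c \<Longrightarrow> psd_on I (\<lambda>i j. complex_of_real c * A i j)"
  unfolding psd_on_def qform_scale by simp

lemma psd_on_cong: "psd_on I A \<Longrightarrow> (\<And>i j. i \<in> I \<Longrightarrow> j \<in> I \<Longrightarrow> B i j = A i j) \<Longrightarrow> psd_on I B"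
  unfolding psd_on_def using qform_cong_op[of I B A] by metis

lemma psd_on_rank1: "psd_on I (rank1 u)"
  unfolding psd_on_def qform_rank1
  by (simp only: complex_mult_cnj Re_complex_of_real Im_complex_of_real) auto

text \<open>Testing the form against \<open>t e\<^sub>x + e\<^sub>j\<close> with \<open>t\<close> a large multiple of \<open>- M x j\<close>
  makes it negative unless \<open>M x j = 0\<close>.\<close>
lemma psd_on_zero_diag_row:
  assumes psd: "psd_on I M" and fin: "finite I" and x: "x \<in> I" and j: "j \<in> I" and jx: "j \<noteq> x"
    and zero: "M x x = 0"
  shows "M x j = 0"
proof (rule ccontr)
  assume nz: "M x j \<noteq> 0"
  define \<mu> where "\<mu> = M x j"
  define s where "s = (Re (M j j) + 1) / (2 * (cmod \<mu>)\<^sup>2)"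
  define t where "t = - complex_of_real s * \<mu>"
  have pos: "0 < (cmod \<mu>)\<^sup>2" using nz by (simp add: \<mu>_def)
  have herm: "M j x = cnj \<mu>" using psd_on_hermitian[OF psd fin x j] by (simp add: \<mu>_def)
  have "qform I M (\<lambda>k. if k = x then t else if k = j then 1 else 0) = cnj t * M x j + M j x * t + M j j"
    using qform_two_point[OF fin x j jx[symmetric], of M t 1] zero by simp
  also have "Re \<dots> = - 2 * s * (cmod \<mu>)\<^sup>2 + Re (M j j)"
  proof -
    have "cnj t * M x j = - complex_of_real s * (cnj \<mu> * \<mu>)" "M j x * t = - complex_of_real s * (cnj \<mu> * \<mu>)"
      by (simp_all add: t_def \<mu>_def herm)
    then show ?thesis unfolding cnj_mult_self by simp
  qed
  also have "\<dots> = -1" using pos by (simp add: s_def field_simps)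
  finally show False using psd unfolding psd_on_def by (metis neg_0_le_iff_le not_one_le_zero)
qed

text \<open>Eliminating \<open>x\<close> by the Schur complement: the quadratic form of \<open>M - u u\<^sup>*\<close> at \<open>v\<close>
  is that of \<open>M\<close> at \<open>v\<close> extended by the minimising value at \<open>x\<close>.\<close>
lemma psd_on_schur_complement:
  assumes psd: "psd_on (insert x F) M" and fin: "finite F" and xF: "x \<notin> F"
    and Mxx: "M x x = complex_of_real p" and pos: "0 < p"
  defines "u \<equiv> \<lambda>i. M i x / complex_of_real (sqrt p)"
  shows "psd_on F (\<lambda>i j. M i j - rank1 u i j)"
  unfolding psd_on_def
proof
  fix v
  have herm: "M j x = cnj (M x j)" if "j \<in> F" for j
    by (rule psd_on_hermitian[OF psd]) (use fin that in auto)
  define s where "s = (\<Sum>j\<in>F. M x j * v j)"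
  define w where "w = v(x := - s / complex_of_real p)"
  have wF: "\<And>k. k \<in> F \<Longrightarrow> w k = v k" using xF by (auto simp: w_def)
  have row: "(\<Sum>j\<in>F. cnj (w x) * M x j * w j) = cnj (w x) * s"
    using wF by (simp add: s_def sum_distrib_left mult.assoc)
  have col: "(\<Sum>i\<in>F. cnj (w i) * M i x * w x) = w x * cnj s"
  proof -
    have "(\<Sum>i\<in>F. cnj (w i) * M i x * w x) = (\<Sum>i\<in>F. w x * cnj (M x i * v i))"
      using wF herm by (intro sum.cong refl) (auto simp: mult.commute)
    then show ?thesis by (simp add: s_def sum_distrib_left)
  qed
  have "qform (insert x F) M w = qform F M v - s * cnj s / complex_of_real p"
    unfolding qform_insert[OF fin xF] row col using Mxx wF qform_cong[of F w v M] pos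
    by (simp add: w_def field_simps)
  moreover have "qform F (\<lambda>i j. M i j - rank1 u i j) v = qform F M v - s * cnj s / complex_of_real p"
  proof -
    have uv: "(\<Sum>i\<in>F. cnj (v i) * u i) = cnj s / complex_of_real (sqrt p)"
      using herm by (simp add: u_def s_def sum_divide_distrib mult.commute)
    have "qform F (\<lambda>i j. M i j - rank1 u i j) v
        = qform F M v - (\<Sum>i\<in>F. cnj (v i) * u i) * cnj (\<Sum>i\<in>F. cnj (v i) * u i)"
      using qform_add[of F M "\<lambda>i j. - rank1 u i j" v] qform_scale[of F "-1" "rank1 u" v]
      by (simp add: qform_rank1)
    also have "\<dots> = qform F M v - s * cnj s / complex_of_real p"
      unfolding uv using pos by (simp flip: of_real_mult)
    finally show ?thesis .
  qed
  ultimately show "Im (qform F (\<lambda>i j. M i j - rank1 u i j) v) = 0 \<and>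
      0 \<le> Re (qform F (\<lambda>i j. M i j - rank1 u i j) v)"
    using psd unfolding psd_on_def by metis
qed

lemma gram_insert_zero_row:
  assumes xF: "x \<notin> F" and row: "\<And>j. j \<in> insert x F \<Longrightarrow> M x j = 0 \<and> M j x = 0"
    and v: "\<forall>i\<in>F. \<forall>j\<in>F. M i j = (\<Sum>k<m. rank1 (v k) i j)"
  shows "\<forall>i\<in>insert x F. \<forall>j\<in>insert x F. M i j = (\<Sum>k<m. rank1 ((v k)(x := 0)) i j)"
proof (intro ballI)
  fix i j assume i: "i \<in> insert x F" and j: "j \<in> insert x F"
  show "M i j = (\<Sum>k<m. rank1 ((v k)(x := 0)) i j)"
  proof (cases "i = x \<or> j = x")
    case True
    then show ?thesis using row[OF i] row[OF j] by (auto simp: rank1_def)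
  next
    case False
    with i j v have "M i j = (\<Sum>k<m. rank1 (v k) i j)" by auto
    with False show ?thesis by (simp add: rank1_def)
  qed
qed

lemma gram_insert_schur:
  fixes M :: "'i op" and x :: 'i and p :: real
  defines "u \<equiv> \<lambda>i. M i x / complex_of_real (sqrt p)"
  assumes herm: "\<And>j. j \<in> insert x F \<Longrightarrow> M j x = cnj (M x j)"
    and Mxx: "M x x = complex_of_real p" and pos: "0 < p"
    and v: "\<forall>i\<in>F. \<forall>j\<in>F. M i j - rank1 u i j = (\<Sum>k<m. rank1 (v k) i j)"
  shows "\<forall>i\<in>insert x F. \<forall>j\<in>insert x F.
    M i j = (\<Sum>k<Suc m. rank1 (case_nat u (\<lambda>k. (v k)(x := 0)) k) i j)"
proof (intro ballI)
  fix i j assume i: "i \<in> insert x F" and j: "j \<in> insert x F"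
  have ux: "u x = complex_of_real (sqrt p)"
    using Mxx pos by (simp add: u_def field_simps flip: of_real_mult)
  have row: "rank1 u x j = M x j"
  proof -
    have "rank1 u x j = complex_of_real (sqrt p) * (cnj (M j x) / complex_of_real (sqrt p))"
      unfolding rank1_def ux by (simp add: u_def)
    also have "\<dots> = M x j" using pos herm[OF j] by simp
    finally show ?thesis .
  qed
  have col: "rank1 u i x = M i x"
    unfolding rank1_def ux using pos by (simp add: u_def)
  have "M i j = rank1 u i j + (\<Sum>k<m. rank1 ((v k)(x := 0)) i j)"
  proof (cases "i = x \<or> j = x")
    case True
    then show ?thesis using row col by (auto simp: rank1_def)
  next
    case False
    with i j v have "M i j - rank1 u i j = (\<Sum>k<m. rank1 (v k) i j)" by blast
    with False show ?thesis by (simp add: rank1_def algebra_simps)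
  qed
  then show "M i j = (\<Sum>k<Suc m. rank1 (case_nat u (\<lambda>k. (v k)(x := 0)) k) i j)"
    by (simp only: sum.lessThan_Suc_shift) simp
qed

lemma psd_on_gram:
  assumes "finite I" "psd_on I M"
  shows "\<exists>(m::nat) v. \<forall>i\<in>I. \<forall>j\<in>I. M i j = (\<Sum>k<m. rank1 (v k) i j)"
  using assms
proof (induction I arbitrary: M rule: finite_induct)
  case empty
  then show ?case by auto
next
  case (insert x F)
  note fin = \<open>finite F\<close> and xF = \<open>x \<notin> F\<close> and psd = \<open>psd_on (insert x F) M\<close>
  have finI: "finite (insert x F)" using fin by simp
  have herm: "M j x = cnj (M x j)" if "j \<in> insert x F" for j
    using psd_on_hermitian[OF psd finI _ that] by simp
  define p where "p = Re (M x x)"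
  have Mxx: "M x x = complex_of_real p" and "0 \<le> p"
    using psd_on_diag[OF psd finI] by (simp_all add: p_def complex_eq_iff)
  show ?case
  proof (cases "p = 0")
    case True
    have row: "M x j = 0 \<and> M j x = 0" if "j \<in> insert x F" for j
      using psd_on_zero_diag_row[OF psd finI, of x j] herm[OF that] that Mxx True by (cases "j = x") auto
    obtain m :: nat and v where v: "\<forall>i\<in>F. \<forall>j\<in>F. M i j = (\<Sum>k<m. rank1 (v k) i j)"
      using insert.IH[OF psd_on_remove[OF psd fin xF]] by blast
    show ?thesis
      by (intro exI[of _ m] exI[of _ "\<lambda>k. (v k)(x := 0)"]) (rule gram_insert_zero_row[OF xF row v])
  next
    case False
    with \<open>0 \<le> p\<close> have pos: "0 < p" by simp
    obtain m :: nat and v where v: "\<forall>i\<in>F. \<forall>j\<in>F.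
        M i j - rank1 (\<lambda>i. M i x / complex_of_real (sqrt p)) i j = (\<Sum>k<m. rank1 (v k) i j)"
      using insert.IH[OF psd_on_schur_complement[OF psd fin xF Mxx pos]] by blast
    show ?thesis
      by (intro exI[of _ "Suc m"] exI[of _ "case_nat (\<lambda>i. M i x / complex_of_real (sqrt p)) (\<lambda>k. (v k)(x := 0))"])
        (rule gram_insert_schur[OF herm Mxx pos v])
  qed
qed

lemma expect_gram:
  assumes "finite I" "psd_on I \<rho>"
  obtains m :: nat and v where "\<And>T. expect I T \<rho> = (\<Sum>k<m. qform I T (v k))"
    and "trace_on I \<rho> = (\<Sum>k<m. complex_of_real (sqnorm I (v k)))"
proof -
  obtain m :: nat and v where v: "\<forall>i\<in>I. \<forall>j\<in>I. \<rho> i j = (\<Sum>k<m. rank1 (v k) i j)"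
    using psd_on_gram[OF assms] by blast
  have "expect I T \<rho> = (\<Sum>k<m. qform I T (v k))" for T
  proof -
    have "expect I T \<rho> = (\<Sum>i\<in>I. \<Sum>j\<in>I. \<Sum>k<m. T i j * rank1 (v k) j i)"
      unfolding expect_def using v by (intro sum.cong refl) (simp add: sum_distrib_left)
    also have "\<dots> = (\<Sum>i\<in>I. \<Sum>k<m. \<Sum>j\<in>I. T i j * rank1 (v k) j i)"
      by (rule sum.cong[OF refl], rule sum.swap)
    also have "\<dots> = (\<Sum>k<m. expect I T (rank1 (v k)))"
      unfolding expect_def by (rule sum.swap)
    finally show ?thesis by (simp add: expect_rank1)
  qed
  moreover have "trace_on I \<rho> = (\<Sum>k<m. complex_of_real (sqnorm I (v k)))"
  proof -
    have "trace_on I \<rho> = (\<Sum>i\<in>I. \<Sum>k<m. rank1 (v k) i i)"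
      unfolding trace_on_def using v by (intro sum.cong refl) simp
    also have "\<dots> = (\<Sum>k<m. trace_on I (rank1 (v k)))"
      unfolding trace_on_def by (rule sum.swap)
    finally show ?thesis by (simp add: trace_rank1)
  qed
  ultimately show ?thesis using that by blast
qed

text \<open>By its Gram decomposition a state is a convex combination of pure states.\<close>
lemma expect_state_Re_le:
  assumes "finite I" "state_on I \<rho>"
    and "\<And>v. (\<Sum>k\<in>K. c k * Re (qform I (T k) v)) \<le> C * sqnorm I v"
  shows "(\<Sum>k\<in>K. c k * Re (expect I (T k) \<rho>)) \<le> C"
proof -
  obtain m :: nat and v where e: "\<And>T. expect I T \<rho> = (\<Sum>l<m. qform I T (v l))"
    and tr: "trace_on I \<rho> = (\<Sum>l<m. complex_of_real (sqnorm I (v l)))"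
    using expect_gram[OF assms(1)] assms(2) unfolding state_on_def by blast
  have norm: "(\<Sum>l<m. sqnorm I (v l)) = 1"
    using arg_cong[OF tr, of Re] assms(2) unfolding state_on_def by simp
  have "(\<Sum>k\<in>K. c k * Re (expect I (T k) \<rho>)) = (\<Sum>l<m. \<Sum>k\<in>K. c k * Re (qform I (T k) (v l)))"
    unfolding e by (simp add: sum_distrib_left) (rule sum.swap)
  also have "\<dots> \<le> (\<Sum>l<m. C * sqnorm I (v l))"
    by (rule sum_mono) (rule assms(3))
  also have "\<dots> = C" using norm by (simp flip: sum_distrib_left)
  finally show ?thesis .
qed

lemma expect_state_abs_Re_le:
  assumes "finite I" "state_on I \<rho>" "\<And>v. \<bar>Re (qform I T v)\<bar> \<le> C * sqnorm I v"
  shows "\<bar>Re (expect I T \<rho>)\<bar> \<le> C"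
proof -
  have "c * Re (expect I T \<rho>) \<le> C" if "\<bar>c\<bar> = 1" for c :: real
  proof -
    have "c * Re (qform I T v) \<le> C * sqnorm I v" for v
    proof -
      have "c * Re (qform I T v) \<le> \<bar>c * Re (qform I T v)\<bar>" by (rule abs_ge_self)
      also have "\<dots> = \<bar>Re (qform I T v)\<bar>" using that by (simp add: abs_mult)
      finally show ?thesis using assms(3)[of v] by linarith
    qed
    then show ?thesis
      using expect_state_Re_le[OF assms(1,2), where K="{()}" and c="\<lambda>_. c" and T="\<lambda>_. T"] by simp
  qed
  from this[of 1] this[of "-1"] show ?thesis by auto
qed

lemma expect_state_real:
  assumes "finite I" "psd_on I \<rho>" "\<And>v. Im (qform I T v) = 0"
  shows "Im (expect I T \<rho>) = 0"
proof -
  obtain m :: nat and v where "\<And>T. expect I T \<rho> = (\<Sum>l<m. qform I T (v l))"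
    using expect_gram[OF assms(1,2)] by blast
  then show ?thesis using assms(3) by simp
qed

definition povm_obs :: "(nat \<Rightarrow> 'i op) \<Rightarrow> 'i op" where
  "povm_obs N = (\<lambda>i j. N 0 i j - N 1 i j)"

lemma qform_povm_sum:
  assumes "finite I" "povm2_on I N"
  shows "qform I (N 0) v + qform I (N 1) v = complex_of_real (sqnorm I v)"
proof -
  have "qform I (N 0) v + qform I (N 1) v = qform I (\<lambda>i j. if i = j then 1 else 0) v"
    unfolding qform_add[symmetric] using assms(2) unfolding povm2_on_def
    by (intro qform_cong_op) auto
  then show ?thesis using qform_identity[OF assms(1)] by simp
qed

lemma qform_povm_obs: "qform I (povm_obs N) v = qform I (N 0) v - qform I (N 1) v"
  unfolding qform_def povm_obs_def by (simp add: sum_subtractf algebra_simps)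

lemma povm_obs_qform_bounds:
  assumes "finite I" "povm2_on I N"
  shows "Im (qform I (povm_obs N) v) = 0" "\<bar>Re (qform I (povm_obs N) v)\<bar> \<le> sqnorm I v"
proof -
  have psd: "psd_on I (N 0)" "psd_on I (N 1)" using assms(2) by (simp_all add: povm2_on_def)
  have "Im (qform I (N 0) v) = 0 \<and> 0 \<le> Re (qform I (N 0) v)"
    "Im (qform I (N 1) v) = 0 \<and> 0 \<le> Re (qform I (N 1) v)"
    using psd unfolding psd_on_def by blast+
  moreover have "Re (qform I (N 0) v) + Re (qform I (N 1) v) = sqnorm I v"
    using arg_cong[OF qform_povm_sum[OF assms], of Re] by simp
  ultimately show "Im (qform I (povm_obs N) v) = 0" "\<bar>Re (qform I (povm_obs N) v)\<bar> \<le> sqnorm I v"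
    unfolding qform_povm_obs by (simp_all add: abs_le_iff)
qed

lemma povm_obs_expect_bounds:
  assumes "finite I" "povm2_on I N" "state_on I \<rho>"
  shows "Im (expect I (povm_obs N) \<rho>) = 0" "\<bar>Re (expect I (povm_obs N) \<rho>)\<bar> \<le> 1"
proof -
  have "psd_on I \<rho>" using assms(3) by (simp add: state_on_def)
  then show "Im (expect I (povm_obs N) \<rho>) = 0"
    by (rule expect_state_real[OF assms(1) _ povm_obs_qform_bounds(1)[OF assms(1,2)]])
  show "\<bar>Re (expect I (povm_obs N) \<rho>)\<bar> \<le> 1"
    using expect_state_abs_Re_le[OF assms(1,3), of "povm_obs N" 1]
      povm_obs_qform_bounds(2)[OF assms(1,2)] by simp
qed

lemma sesq_polarisation:
  "sesq I M (\<lambda>i. p i + q i) (\<lambda>i. p i + q i) - sesq I M (\<lambda>i. p i - q i) (\<lambda>i. p i - q i)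
   = 2 * (sesq I M p q + sesq I M q p)"
proof -
  have "sesq I M (\<lambda>i. p i + q i) (\<lambda>i. p i + q i) - sesq I M (\<lambda>i. p i - q i) (\<lambda>i. p i - q i)
     = (\<Sum>i\<in>I. \<Sum>j\<in>I. 2 * (cnj (p i) * M i j * q j) + 2 * (cnj (q i) * M i j * p j))"
    unfolding sesq_def sum_subtractf[symmetric] by (intro sum.cong refl) (simp add: algebra_simps)
  then show ?thesis by (simp add: sesq_def sum.distrib sum_distrib_left)
qed

lemma sqnorm_parallelogram:
  "sqnorm I (\<lambda>i. p i + q i) + sqnorm I (\<lambda>i. p i - q i) = 2 * sqnorm I p + 2 * sqnorm I q"
proof -
  have "\<And>a b :: complex. (cmod (a + b))\<^sup>2 + (cmod (a - b))\<^sup>2 = 2 * (cmod a)\<^sup>2 + 2 * (cmod b)\<^sup>2"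
    unfolding cmod_power2 by (simp add: power2_eq_square algebra_simps)
  then show ?thesis unfolding sqnorm_def by (simp add: sum.distrib[symmetric] sum_distrib_left)
qed

lemma sqnorm_scale: "sqnorm I (\<lambda>i. c * p i) = (cmod c)\<^sup>2 * sqnorm I p"
  unfolding sqnorm_def by (simp add: sum_distrib_left norm_mult power_mult_distrib)

lemma sesq_scale_left: "sesq I M (\<lambda>i. c * p i) q = cnj c * sesq I M p q"
  unfolding sesq_def by (simp add: sum_distrib_left mult_ac)

lemma sesq_scale_right: "sesq I M p (\<lambda>i. c * q i) = c * sesq I M p q"
  unfolding sesq_def by (simp add: sum_distrib_left mult_ac)

text \<open>For \<open>t = 1\<close> this is polarisation together with \<open>-1 \<le> B \<le> 1\<close>; rescaling \<open>p\<close> and \<open>q\<close>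
  by \<open>\<surd>t\<close> and \<open>1/\<surd>t\<close> gives the weighted form.\<close>
lemma povm_obs_sesq_sym_le:
  assumes "finite I" "povm2_on I N" "0 < t"
  shows "Re (sesq I (povm_obs N) p q + sesq I (povm_obs N) q p) \<le> t * sqnorm I p + sqnorm I q / t"
proof -
  let ?B = "povm_obs N"
  have unit: "Re (sesq I ?B p q + sesq I ?B q p) \<le> sqnorm I p + sqnorm I q" for p q
  proof -
    have "2 * Re (sesq I ?B p q + sesq I ?B q p)
        = Re (qform I ?B (\<lambda>i. p i + q i)) - Re (qform I ?B (\<lambda>i. p i - q i))"
      using arg_cong[OF sesq_polarisation[of I ?B p q], of Re] by (simp add: qform_eq_sesq)
    also have "\<dots> \<le> sqnorm I (\<lambda>i. p i + q i) + sqnorm I (\<lambda>i. p i - q i)"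
      using povm_obs_qform_bounds(2)[OF assms(1,2), of "\<lambda>i. p i + q i"]
        povm_obs_qform_bounds(2)[OF assms(1,2), of "\<lambda>i. p i - q i"] by (simp add: abs_le_iff)
    finally show ?thesis using sqnorm_parallelogram[of I p q] by simp
  qed
  define r where "r = sqrt t"
  have r: "0 < r" "r\<^sup>2 = t" using assms(3) by (simp_all add: r_def)
  let ?p = "\<lambda>i. complex_of_real r * p i" and ?q = "\<lambda>i. complex_of_real (1 / r) * q i"
  have "sesq I ?B ?p ?q = sesq I ?B p q" "sesq I ?B ?q ?p = sesq I ?B q p"
    unfolding sesq_def using r(1) by (simp_all add: field_simps)
  moreover have "sqnorm I ?p = t * sqnorm I p" "sqnorm I ?q = sqnorm I q / t"
    using r unfolding sqnorm_def
    by (simp_all add: norm_mult norm_divide power_mult_distrib power_divide sum_distrib_left sum_divide_distrib)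
  ultimately show ?thesis using unit[of ?p ?q] by simp
qed

lemma sesq_rank1: "sesq I (rank1 w) p q = cnj (\<Sum>i\<in>I. cnj (w i) * p i) * (\<Sum>i\<in>I. cnj (w i) * q i)"
proof -
  have "sesq I (rank1 w) p q = (\<Sum>i\<in>I. cnj (p i) * w i) * (\<Sum>j\<in>I. cnj (w j) * q j)"
    unfolding sesq_def rank1_def sum_product by (simp add: mult_ac)
  then show ?thesis by (simp add: mult.commute)
qed

lemma qform_tensor:
  "qform (I \<times> J) (tensor A B) v = (\<Sum>i\<in>I. \<Sum>i'\<in>I. A i i' * sesq J B (\<lambda>j. v (i, j)) (\<lambda>j. v (i', j)))"
proof -
  have "qform (I \<times> J) (tensor A B) v
      = (\<Sum>i\<in>I. \<Sum>j\<in>J. \<Sum>i'\<in>I. \<Sum>j'\<in>J. A i i' * (cnj (v (i, j)) * B j j' * v (i', j')))"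
    unfolding qform_def tensor_def sum.cartesian_product' by (simp add: mult_ac)
  also have "\<dots> = (\<Sum>i\<in>I. \<Sum>i'\<in>I. \<Sum>j\<in>J. \<Sum>j'\<in>J. A i i' * (cnj (v (i, j)) * B j j' * v (i', j')))"
    by (rule sum.cong[OF refl], rule sum.swap)
  finally show ?thesis unfolding sesq_def by (simp add: sum_distrib_left)
qed

lemma psd_on_tensor:
  fixes A :: "'a op" and B :: "'b op"
  assumes "finite J" "psd_on I A" "psd_on J B"
  shows "psd_on (I \<times> J) (tensor A B)"
  unfolding psd_on_def
proof
  fix v :: "'a \<times> 'b \<Rightarrow> complex"
  obtain m :: nat and w where w: "\<forall>j\<in>J. \<forall>j'\<in>J. B j j' = (\<Sum>k<m. rank1 (w k) j j')"
    using psd_on_gram[OF assms(1,3)] by blast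
  define \<alpha> where "\<alpha> k i = (\<Sum>j\<in>J. cnj (w k j) * v (i, j))" for k i
  have "sesq J B p q = (\<Sum>k<m. sesq J (rank1 (w k)) p q)" for p q
  proof -
    have "sesq J B p q = (\<Sum>j\<in>J. \<Sum>j'\<in>J. \<Sum>k<m. cnj (p j) * rank1 (w k) j j' * q j')"
      unfolding sesq_def using w by (intro sum.cong refl) (simp add: sum_distrib_left sum_distrib_right)
    also have "\<dots> = (\<Sum>j\<in>J. \<Sum>k<m. \<Sum>j'\<in>J. cnj (p j) * rank1 (w k) j j' * q j')"
      by (rule sum.cong[OF refl], rule sum.swap)
    also have "\<dots> = (\<Sum>k<m. \<Sum>j\<in>J. \<Sum>j'\<in>J. cnj (p j) * rank1 (w k) j j' * q j')"
      by (rule sum.swap)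
    finally show ?thesis unfolding sesq_def .
  qed
  then have "qform (I \<times> J) (tensor A B) v = (\<Sum>i\<in>I. \<Sum>i'\<in>I. \<Sum>k<m. A i i' * (cnj (\<alpha> k i) * \<alpha> k i'))"
    unfolding qform_tensor sesq_rank1 \<alpha>_def by (simp add: sum_distrib_left)
  also have "\<dots> = (\<Sum>k<m. qform I A (\<alpha> k))"
    unfolding qform_def by (simp add: sum.swap[of _ "{..<m}"] mult_ac)
  finally show "Im (qform (I \<times> J) (tensor A B) v) = 0 \<and> 0 \<le> Re (qform (I \<times> J) (tensor A B) v)"
    using assms(2) unfolding psd_on_def by (auto intro: sum_nonneg)
qed

text \<open>Outcome \<open>k\<close> means that the outcomes of the two local measurements have parity \<open>k\<close>.\<close>
definition parity_povm :: "(nat \<Rightarrow> 'a op) \<Rightarrow> (nat \<Rightarrow> 'b op) \<Rightarrow> nat \<Rightarrow> ('a \<times> 'b) op" where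
  "parity_povm M N k = (\<lambda>i j. tensor (M 0) (N k) i j + tensor (M 1) (N (1 - k)) i j)"

lemma povm_obs_parity: "povm_obs (parity_povm M N) = tensor (povm_obs M) (povm_obs N)"
  unfolding povm_obs_def parity_povm_def tensor_def by (auto simp: fun_eq_iff algebra_simps)

lemma povm2_on_parity:
  assumes "finite J" "povm2_on I M" "povm2_on J N"
  shows "povm2_on (I \<times> J) (parity_povm M N)"
  unfolding povm2_on_def
proof (intro conjI ballI)
  have psd: "psd_on I (M 0)" "psd_on I (M 1)" "psd_on J (N 0)" "psd_on J (N 1)"
    using assms(2,3) unfolding povm2_on_def by auto
  show "psd_on (I \<times> J) (parity_povm M N 0)" "psd_on (I \<times> J) (parity_povm M N 1)"
    unfolding parity_povm_def using psd by (auto intro!: psd_on_add psd_on_tensor assms(1))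
  fix ij ij' assume "ij \<in> I \<times> J" "ij' \<in> I \<times> J"
  then obtain i j i' j' where ij: "ij = (i, j)" "ij' = (i', j')" "i \<in> I" "j \<in> J" "i' \<in> I" "j' \<in> J"
    by auto
  have "parity_povm M N 0 ij ij' + parity_povm M N 1 ij ij' = (M 0 i i' + M 1 i i') * (N 0 j j' + N 1 j j')"
    unfolding parity_povm_def tensor_def ij by (simp add: algebra_simps)
  also have "\<dots> = (if ij = ij' then 1 else 0)"
    using assms(2,3) ij unfolding povm2_on_def by auto
  finally show "parity_povm M N 0 ij ij' + parity_povm M N 1 ij ij' = (if ij = ij' then 1 else 0)" .
qed

lemma qubit_eq: "qubit = {0, 1}"
  by (auto simp: qubit_def)

lemma finite_qubit: "finite qubit"
  by (simp add: qubit_def)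

lemma qform_alice_obs:
  "qform qubit (alice_obs 0) v = cnj (v 0) * v 1 + cnj (v 1) * v 0"
  "qform qubit (alice_obs 1) v = - \<i> * (cnj (v 0) * v 1) + \<i> * (cnj (v 1) * v 0)"
  unfolding qform_def qubit_eq by (simp_all add: alice_obs_def sigma_x_def sigma_y_def algebra_simps)

text \<open>With \<open>z = v\<^sub>0\<^sup>* v\<^sub>1\<close> the two forms are \<open>2 Re z\<close> and \<open>2 Im z\<close>, so the combination is
  \<open>2 Re ((s - i t) z) \<le> 2 |s + i t| |v\<^sub>0| |v\<^sub>1| \<le> \<surd>2 (|v\<^sub>0|\<^sup>2 + |v\<^sub>1|\<^sup>2)\<close>.\<close>
lemma alice_qform_bound:
  assumes "\<bar>s\<bar> \<le> 1" "\<bar>t\<bar> \<le> 1"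
  shows "s * Re (qform qubit (alice_obs 0) v) + t * Re (qform qubit (alice_obs 1) v) \<le> sqrt 2 * sqnorm qubit v"
proof -
  define z where "z = cnj (v 0) * v 1"
  have "cnj (v 1) * v 0 = cnj z" by (simp add: z_def)
  then have "s * Re (qform qubit (alice_obs 0) v) + t * Re (qform qubit (alice_obs 1) v)
      = 2 * Re (cnj (Complex s t) * z)"
    unfolding qform_alice_obs z_def[symmetric] by (simp add: algebra_simps)
  also have "\<dots> \<le> 2 * (cmod (Complex s t) * cmod z)"
    using complex_Re_le_cmod[of "cnj (Complex s t) * z"] by (simp add: norm_mult)
  also have "\<dots> \<le> 2 * (sqrt 2 * (cmod (v 0) * cmod (v 1)))"
  proof -
    have "s\<^sup>2 + t\<^sup>2 \<le> 2" using assms by (simp add: abs_le_square_iff[of _ 1, simplified] add_mono)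
    then have "cmod (Complex s t) \<le> sqrt 2" by (simp add: complex_norm)
    then show ?thesis by (simp add: z_def norm_mult mult_right_mono)
  qed
  also have "\<dots> \<le> sqrt 2 * ((cmod (v 0))\<^sup>2 + (cmod (v 1))\<^sup>2)"
    using mult_left_mono[OF sum_squares_bound[of "cmod (v 0)" "cmod (v 1)"], of "sqrt 2"]
    by (simp add: algebra_simps)
  also have "\<dots> = sqrt 2 * sqnorm qubit v"
    unfolding sqnorm_def qubit_eq by simp
  finally show ?thesis .
qed

lemma alice_expect_bound:
  assumes "state_on qubit \<rho>" "\<bar>s\<bar> \<le> 1" "\<bar>t\<bar> \<le> 1"
  shows "s * Re (expect qubit (alice_obs 0) \<rho>) + t * Re (expect qubit (alice_obs 1) \<rho>) \<le> sqrt 2"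
  using expect_state_Re_le[OF finite_qubit assms(1), where K="{0, 1}"
      and c="\<lambda>x. if x = 0 then s else t" and T=alice_obs and C="sqrt 2"]
    alice_qform_bound[OF assms(2,3)] by simp

lemma sqnorm_qubit_times:
  "sqnorm (qubit \<times> D) v = sqnorm D (\<lambda>j. v (0, j)) + sqnorm D (\<lambda>j. v (1, j))"
  unfolding sqnorm_def sum.cartesian_product' qubit_eq by simp

lemma qform_tensor_alice_obs:
  "qform (qubit \<times> D) (tensor (alice_obs 0) B) v
     = sesq D B (\<lambda>j. v (0, j)) (\<lambda>j. v (1, j)) + sesq D B (\<lambda>j. v (1, j)) (\<lambda>j. v (0, j))"
  "qform (qubit \<times> D) (tensor (alice_obs 1) B) v
     = - \<i> * sesq D B (\<lambda>j. v (0, j)) (\<lambda>j. v (1, j)) + \<i> * sesq D B (\<lambda>j. v (1, j)) (\<lambda>j. v (0, j))"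
  unfolding qform_tensor qubit_eq by (simp_all add: alice_obs_def sigma_x_def sigma_y_def)

text \<open>Writing \<open>v = |0\<rangle> u\<^sub>0 + |1\<rangle> u\<^sub>1\<close>, the combination equals
  \<open>\<Sum>\<^sub>y Re (\<langle>u\<^sub>0, B\<^sub>y w\<^sub>y\<rangle> + \<langle>w\<^sub>y, B\<^sub>y u\<^sub>0\<rangle>)\<close> with \<open>w\<^sub>0 = (k\<^sub>1 - i k\<^sub>0) u\<^sub>1\<close> and
  \<open>w\<^sub>1 = (k\<^sub>0 + i k\<^sub>1) u\<^sub>1\<close>, and \<open>|w\<^sub>y|\<^sup>2 \<le> 2 |u\<^sub>1|\<^sup>2\<close>; each term is then bounded with weight \<open>\<surd>2\<close>.\<close>
lemma tensor_alice_obs_qform_bound: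
  fixes N :: "nat \<Rightarrow> nat \<Rightarrow> 'i op" and D :: "'i set" and v :: "nat \<times> 'i \<Rightarrow> complex"
  defines "q \<equiv> \<lambda>x y. Re (qform (qubit \<times> D) (tensor (alice_obs x) (povm_obs (N y))) v)"
  assumes fin: "finite D" and N: "povm2_on D (N 0)" "povm2_on D (N 1)"
    and k: "\<bar>k\<^sub>0\<bar> \<le> 1" "\<bar>k\<^sub>1\<bar> \<le> 1"
  shows "k\<^sub>1 * q 0 0 + k\<^sub>0 * q 0 1 + k\<^sub>0 * q 1 0 - k\<^sub>1 * q 1 1 \<le> 2 * sqrt 2 * sqnorm (qubit \<times> D) v"
proof -
  define u\<^sub>0 where "u\<^sub>0 = (\<lambda>j. v (0, j))"
  define u\<^sub>1 where "u\<^sub>1 = (\<lambda>j. v (1, j))"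
  define c\<^sub>0 where "c\<^sub>0 = Complex k\<^sub>1 (- k\<^sub>0)"
  define c\<^sub>1 where "c\<^sub>1 = Complex k\<^sub>0 k\<^sub>1"
  define w where "w y = (\<lambda>i. (if y = 0 then c\<^sub>0 else c\<^sub>1) * u\<^sub>1 i)" for y :: nat
  let ?S = "\<lambda>y p q. sesq D (povm_obs (N y)) p q"
  have comb: "k\<^sub>1 * q 0 0 + k\<^sub>0 * q 0 1 + k\<^sub>0 * q 1 0 - k\<^sub>1 * q 1 1
      = Re (?S 0 u\<^sub>0 (w 0) + ?S 0 (w 0) u\<^sub>0) + Re (?S 1 u\<^sub>0 (w 1) + ?S 1 (w 1) u\<^sub>0)"
    unfolding q_def qform_tensor_alice_obs w_def sesq_scale_left sesq_scale_right
      c\<^sub>0_def c\<^sub>1_def u\<^sub>0_def u\<^sub>1_def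
    by (simp add: algebra_simps)
  have norm_w: "sqnorm D (w y) \<le> 2 * sqnorm D u\<^sub>1" for y
  proof -
    have "k\<^sub>0\<^sup>2 + k\<^sub>1\<^sup>2 \<le> 2" using k by (simp add: abs_le_square_iff[of _ 1, simplified] add_mono)
    moreover have "(cmod (if y = 0 then c\<^sub>0 else c\<^sub>1))\<^sup>2 = k\<^sub>0\<^sup>2 + k\<^sub>1\<^sup>2"
      by (simp add: c\<^sub>0_def c\<^sub>1_def cmod_power2)
    ultimately show ?thesis
      unfolding w_def sqnorm_scale using sqnorm_nonneg[of D u\<^sub>1] by (simp add: mult_right_mono)
  qed
  have half: "Re (?S y u\<^sub>0 (w y) + ?S y (w y) u\<^sub>0) \<le> sqrt 2 * sqnorm D u\<^sub>0 + sqrt 2 * sqnorm D u\<^sub>1"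
    if "y \<in> {0, 1}" for y
  proof -
    have "Re (?S y u\<^sub>0 (w y) + ?S y (w y) u\<^sub>0) \<le> sqrt 2 * sqnorm D u\<^sub>0 + sqnorm D (w y) / sqrt 2"
      using povm_obs_sesq_sym_le[OF fin _ real_sqrt_gt_zero] N that by auto
    also have "sqnorm D (w y) / sqrt 2 \<le> 2 * sqnorm D u\<^sub>1 / sqrt 2"
      using norm_w by (simp add: divide_right_mono)
    also have "2 * sqnorm D u\<^sub>1 / sqrt 2 = sqrt 2 * sqnorm D u\<^sub>1"
      by (simp add: field_simps)
    finally show ?thesis by simp
  qed
  show ?thesis
    unfolding comb sqnorm_qubit_times u\<^sub>0_def[symmetric] u\<^sub>1_def[symmetric]
    using half[of 0] half[of 1] by (auto simp: distrib_left)
qed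

lemma tensor_alice_obs_expect_bound:
  fixes N :: "nat \<Rightarrow> nat \<Rightarrow> 'i op" and D :: "'i set" and \<rho> :: "(nat \<times> 'i) op"
  defines "e \<equiv> \<lambda>x y. Re (expect (qubit \<times> D) (tensor (alice_obs x) (povm_obs (N y))) \<rho>)"
  assumes "finite D" "povm2_on D (N 0)" "povm2_on D (N 1)" "state_on (qubit \<times> D) \<rho>"
    and "\<bar>k\<^sub>0\<bar> \<le> 1" "\<bar>k\<^sub>1\<bar> \<le> 1"
  shows "k\<^sub>1 * e 0 0 + k\<^sub>0 * e 0 1 + k\<^sub>0 * e 1 0 - k\<^sub>1 * e 1 1 \<le> 2 * sqrt 2"
proof -
  let ?c = "\<lambda>(x, y). if x = 0 then (if y = 0 then k\<^sub>1 else k\<^sub>0) else (if y = 0 then k\<^sub>0 else - k\<^sub>1)"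
  let ?T = "\<lambda>(x, y). tensor (alice_obs x) (povm_obs (N y))"
  have fin: "finite (qubit \<times> D)" using assms(2) finite_qubit by simp
  have "(\<Sum>xy\<in>{0, 1::nat} \<times> {0, 1::nat}. ?c xy * Re (expect (qubit \<times> D) (?T xy) \<rho>)) \<le> 2 * sqrt 2"
  proof (rule expect_state_Re_le[OF fin assms(5)])
    fix v
    show "(\<Sum>xy\<in>{0, 1::nat} \<times> {0, 1::nat}. ?c xy * Re (qform (qubit \<times> D) (?T xy) v))
        \<le> 2 * sqrt 2 * sqnorm (qubit \<times> D) v"
      using tensor_alice_obs_qform_bound[OF assms(2-4,6-7), of v] by (simp add: sum.cartesian_product')
  qed
  then show ?thesis unfolding e_def by (simp add: sum.cartesian_product')
qed

section \<open>Mermin bounds for the three kinds of product states\<close>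

definition mermin_comb :: "(nat \<Rightarrow> nat \<Rightarrow> nat \<Rightarrow> 'a::ab_group_add) \<Rightarrow> 'a" where
  "mermin_comb E = E 0 0 1 + E 0 1 0 + E 1 0 0 - E 1 1 1"

lemma mermin_comb_swap: "mermin_comb (\<lambda>x y z. E x z y) = mermin_comb E"
  unfolding mermin_comb_def by (simp add: algebra_simps)

lemma expect_A_BC_mermin_bound:
  fixes N :: "nat \<Rightarrow> nat \<Rightarrow> 'b op" and N' :: "nat \<Rightarrow> nat \<Rightarrow> 'c op"
    and DB :: "'b set" and DC :: "'c set" and \<rho>A :: "nat op" and \<rho>BC :: "('b \<times> 'c) op"
  defines "tA \<equiv> \<lambda>x. expect qubit (alice_obs x) \<rho>A"
    and "tBC \<equiv> \<lambda>y z. expect (DB \<times> DC) (tensor (povm_obs (N y)) (povm_obs (N' z))) \<rho>BC"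
  assumes fin: "finite DB" "finite DC"
    and N: "\<forall>y\<in>{0, 1}. povm2_on DB (N y)" and N': "\<forall>z\<in>{0, 1}. povm2_on DC (N' z)"
    and st: "state_on qubit \<rho>A" "state_on (DB \<times> DC) \<rho>BC"
  shows "Re (mermin_comb (\<lambda>x y z. tA x * tBC y z)) \<le> 2 * sqrt 2"
proof -
  have BC: "Im (tBC y z) = 0 \<and> \<bar>Re (tBC y z)\<bar> \<le> 1" if "y \<in> {0, 1}" "z \<in> {0, 1}" for y z
    using povm_obs_expect_bounds[OF _ povm2_on_parity st(2)] N N' fin that
    unfolding tBC_def povm_obs_parity by auto
  define s where "s = (Re (tBC 0 1) + Re (tBC 1 0)) / 2"
  define t where "t = (Re (tBC 0 0) - Re (tBC 1 1)) / 2"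
  have "\<bar>s\<bar> \<le> 1" "\<bar>t\<bar> \<le> 1"
    using BC[of 0 1] BC[of 1 0] BC[of 0 0] BC[of 1 1] by (simp_all add: s_def t_def abs_le_iff)
  then have "s * Re (tA 0) + t * Re (tA 1) \<le> sqrt 2"
    unfolding tA_def by (rule alice_expect_bound[OF st(1)])
  moreover have "Re (mermin_comb (\<lambda>x y z. tA x * tBC y z)) = 2 * (s * Re (tA 0) + t * Re (tA 1))"
    using BC[of 0 1] BC[of 1 0] BC[of 0 0] BC[of 1 1]
    by (simp add: mermin_comb_def s_def t_def field_simps)
  ultimately show ?thesis by simp
qed

lemma expect_AB_C_mermin_bound:
  fixes N :: "nat \<Rightarrow> nat \<Rightarrow> 'b op" and N' :: "nat \<Rightarrow> nat \<Rightarrow> 'c op"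
    and DB :: "'b set" and DC :: "'c set" and \<rho>AB :: "(nat \<times> 'b) op" and \<rho>C :: "'c op"
  defines "tAB \<equiv> \<lambda>x y. expect (qubit \<times> DB) (tensor (alice_obs x) (povm_obs (N y))) \<rho>AB"
    and "tC \<equiv> \<lambda>z. expect DC (povm_obs (N' z)) \<rho>C"
  assumes fin: "finite DB" "finite DC"
    and N: "\<forall>y\<in>{0, 1}. povm2_on DB (N y)" and N': "\<forall>z\<in>{0, 1}. povm2_on DC (N' z)"
    and st: "state_on (qubit \<times> DB) \<rho>AB" "state_on DC \<rho>C"
  shows "Re (mermin_comb (\<lambda>x y z. tAB x y * tC z)) \<le> 2 * sqrt 2"
proof -
  have C: "Im (tC z) = 0 \<and> \<bar>Re (tC z)\<bar> \<le> 1" if "z \<in> {0, 1}" for z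
    using povm_obs_expect_bounds[OF fin(2) _ st(2)] N' that unfolding tC_def by auto
  have "Re (tC 1) * Re (tAB 0 0) + Re (tC 0) * Re (tAB 0 1) + Re (tC 0) * Re (tAB 1 0)
      - Re (tC 1) * Re (tAB 1 1) \<le> 2 * sqrt 2"
    unfolding tAB_def using tensor_alice_obs_expect_bound[OF fin(1) _ _ st(1)] N C by auto
  then show ?thesis using C[of 0] C[of 1] by (simp add: mermin_comb_def algebra_simps)
qed

section \<open>Correlators of biseparable states\<close>

lemma expect_tensor:
  "expect (A \<times> B) (tensor M N) Y = (\<Sum>a\<in>A. \<Sum>b\<in>B. \<Sum>a'\<in>A. \<Sum>b'\<in>B. M a a' * N b b' * Y (a', b') (a, b))"
  unfolding expect_def tensor_def sum.cartesian_product' by simp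

lemma sum_swap_inner3:
  "(\<Sum>b\<in>B. \<Sum>c\<in>C. \<Sum>a\<in>A. g b c a) = (\<Sum>a\<in>A. \<Sum>b\<in>B. \<Sum>c\<in>C. g b c a)"
proof -
  have "(\<Sum>b\<in>B. \<Sum>c\<in>C. \<Sum>a\<in>A. g b c a) = (\<Sum>b\<in>B. \<Sum>a\<in>A. \<Sum>c\<in>C. g b c a)"
    by (rule sum.cong[OF refl], rule sum.swap)
  also have "\<dots> = (\<Sum>a\<in>A. \<Sum>b\<in>B. \<Sum>c\<in>C. g b c a)" by (rule sum.swap)
  finally show ?thesis .
qed

lemma tri_sum_split_A_BC:
  "(\<Sum>(a, b, c)\<in>A \<times> B \<times> C. \<Sum>(a', b', c')\<in>A \<times> B \<times> C.
      MA a a' * NB b b' * NC c c' * (X a' a * Y (b', c') (b, c)))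
   = expect A MA X * expect (B \<times> C) (tensor NB NC) Y"
  (is "_ = ?rhs")
proof -
  let ?F = "\<lambda>a b c a' b' c'. (MA a a' * X a' a) * (NB b b' * NC c c' * Y (b', c') (b, c))"
  have "(\<Sum>(a, b, c)\<in>A \<times> B \<times> C. \<Sum>(a', b', c')\<in>A \<times> B \<times> C.
      MA a a' * NB b b' * NC c c' * (X a' a * Y (b', c') (b, c)))
    = (\<Sum>a\<in>A. \<Sum>b\<in>B. \<Sum>c\<in>C. \<Sum>a'\<in>A. \<Sum>b'\<in>B. \<Sum>c'\<in>C. ?F a b c a' b' c')"
    by (simp add: sum.cartesian_product' mult_ac)
  also have "\<dots> = (\<Sum>a\<in>A. \<Sum>a'\<in>A. \<Sum>b\<in>B. \<Sum>c\<in>C. \<Sum>b'\<in>B. \<Sum>c'\<in>C. ?F a b c a' b' c')"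
    by (rule sum.cong[OF refl], rule sum_swap_inner3)
  also have "\<dots> = ?rhs"
    unfolding expect_tensor unfolding expect_def sum_distrib_right unfolding sum_distrib_left ..
  finally show ?thesis .
qed

lemma tri_sum_split_AC_B:
  "(\<Sum>(a, b, c)\<in>A \<times> B \<times> C. \<Sum>(a', b', c')\<in>A \<times> B \<times> C.
      MA a a' * NB b b' * NC c c' * (Z (a', c') (a, c) * W b' b))
   = expect (A \<times> C) (tensor MA NC) Z * expect B NB W"
  (is "_ = ?rhs")
proof -
  let ?F = "\<lambda>a b c a' b' c'. (MA a a' * NC c c' * Z (a', c') (a, c)) * (NB b b' * W b' b)"
  have "(\<Sum>(a, b, c)\<in>A \<times> B \<times> C. \<Sum>(a', b', c')\<in>A \<times> B \<times> C.
      MA a a' * NB b b' * NC c c' * (Z (a', c') (a, c) * W b' b))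
    = (\<Sum>a\<in>A. \<Sum>b\<in>B. \<Sum>c\<in>C. \<Sum>a'\<in>A. \<Sum>b'\<in>B. \<Sum>c'\<in>C. ?F a b c a' b' c')"
    by (simp add: sum.cartesian_product' mult_ac)
  also have "\<dots> = (\<Sum>a\<in>A. \<Sum>c\<in>C. \<Sum>b\<in>B. \<Sum>a'\<in>A. \<Sum>b'\<in>B. \<Sum>c'\<in>C. ?F a b c a' b' c')"
    by (rule sum.cong[OF refl], rule sum.swap)
  also have "\<dots> = (\<Sum>a\<in>A. \<Sum>c\<in>C. \<Sum>a'\<in>A. \<Sum>b\<in>B. \<Sum>b'\<in>B. \<Sum>c'\<in>C. ?F a b c a' b' c')"
    by (rule sum.cong[OF refl], rule sum.cong[OF refl], rule sum.swap)
  also have "\<dots> = (\<Sum>a\<in>A. \<Sum>c\<in>C. \<Sum>a'\<in>A. \<Sum>c'\<in>C. \<Sum>b\<in>B. \<Sum>b'\<in>B. ?F a b c a' b' c')"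
    by (rule sum.cong[OF refl], rule sum.cong[OF refl], rule sum.cong[OF refl], rule sum_swap_inner3)
  also have "\<dots> = ?rhs"
    unfolding expect_tensor unfolding expect_def sum_distrib_right unfolding sum_distrib_left ..
  finally show ?thesis .
qed

lemma tri_sum_split_AB_C:
  "(\<Sum>(a, b, c)\<in>A \<times> B \<times> C. \<Sum>(a', b', c')\<in>A \<times> B \<times> C.
      MA a a' * NB b b' * NC c c' * (Z (a', b') (a, b) * W c' c))
   = expect (A \<times> B) (tensor MA NB) Z * expect C NC W"
  (is "_ = ?rhs")
proof -
  let ?F = "\<lambda>a b c a' b' c'. (MA a a' * NB b b' * Z (a', b') (a, b)) * (NC c c' * W c' c)"
  have "(\<Sum>(a, b, c)\<in>A \<times> B \<times> C. \<Sum>(a', b', c')\<in>A \<times> B \<times> C.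
      MA a a' * NB b b' * NC c c' * (Z (a', b') (a, b) * W c' c))
    = (\<Sum>a\<in>A. \<Sum>b\<in>B. \<Sum>c\<in>C. \<Sum>a'\<in>A. \<Sum>b'\<in>B. \<Sum>c'\<in>C. ?F a b c a' b' c')"
    by (simp add: sum.cartesian_product' mult_ac)
  also have "\<dots> = (\<Sum>a\<in>A. \<Sum>b\<in>B. \<Sum>a'\<in>A. \<Sum>c\<in>C. \<Sum>b'\<in>B. \<Sum>c'\<in>C. ?F a b c a' b' c')"
    by (rule sum.cong[OF refl], rule sum.cong[OF refl], rule sum.swap)
  also have "\<dots> = (\<Sum>a\<in>A. \<Sum>b\<in>B. \<Sum>a'\<in>A. \<Sum>b'\<in>B. \<Sum>c\<in>C. \<Sum>c'\<in>C. ?F a b c a' b' c')"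
    by (rule sum.cong[OF refl], rule sum.cong[OF refl], rule sum.cong[OF refl], rule sum.swap)
  also have "\<dots> = ?rhs"
    unfolding expect_tensor unfolding expect_def sum_distrib_right unfolding sum_distrib_left ..
  finally show ?thesis .
qed

lemma tri_prob_biseparable:
  assumes "\<forall>(a, b, c) \<in> tri_index d. \<forall>(a', b', c') \<in> tri_index d.
          \<rho> (a, b, c) (a', b', c') =
            (\<Sum>l<n. of_real (p l) * \<rho>A l a a' * \<rho>BC l (b, c) (b', c')
                  + of_real (q l) * \<rho>AC l (a, c) (a', c') * \<rho>B l b b'
                  + of_real (r l) * \<rho>AB l (a, b) (a', b') * \<rho>C l c c')"
  shows "tri_prob d \<rho> MA NB NC = (\<Sum>l<n.
      of_real (p l) * (expect qubit MA (\<rho>A l) * expect ({0..<d} \<times> {0..<d}) (tensor NB NC) (\<rho>BC l))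
    + of_real (q l) * (expect (qubit \<times> {0..<d}) (tensor MA NC) (\<rho>AC l) * expect {0..<d} NB (\<rho>B l))
    + of_real (r l) * (expect (qubit \<times> {0..<d}) (tensor MA NB) (\<rho>AB l) * expect {0..<d} NC (\<rho>C l)))"
proof -
  let ?T = "qubit \<times> {0..<d} \<times> {0..<d}"
  let ?f = "\<lambda>(a::nat, b::nat, c::nat) (a'::nat, b'::nat, c'::nat). MA a a' * NB b b' * NC c c'"
  define f1 where "f1 l = (\<lambda>(a::nat, b::nat, c::nat) (a'::nat, b'::nat, c'::nat).
    MA a a' * NB b b' * NC c c' * (\<rho>A l a' a * \<rho>BC l (b', c') (b, c)))" for l
  define f2 where "f2 l = (\<lambda>(a::nat, b::nat, c::nat) (a'::nat, b'::nat, c'::nat).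
    MA a a' * NB b b' * NC c c' * (\<rho>AC l (a', c') (a, c) * \<rho>B l b' b))" for l
  define f3 where "f3 l = (\<lambda>(a::nat, b::nat, c::nat) (a'::nat, b'::nat, c'::nat).
    MA a a' * NB b b' * NC c c' * (\<rho>AB l (a', b') (a, b) * \<rho>C l c' c))" for l
  have pointwise: "MA a a' * NB b b' * NC c c' * \<rho> (a', b', c') (a, b, c) = (\<Sum>l<n.
      of_real (p l) * f1 l (a, b, c) (a', b', c') + of_real (q l) * f2 l (a, b, c) (a', b', c')
      + of_real (r l) * f3 l (a, b, c) (a', b', c'))"
    if "(a, b, c) \<in> ?T" "(a', b', c') \<in> ?T" for a b c a' b' c'
  proof -
    have "\<rho> (a', b', c') (a, b, c) = (\<Sum>l<n. of_real (p l) * \<rho>A l a' a * \<rho>BC l (b', c') (b, c)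
        + of_real (q l) * \<rho>AC l (a', c') (a, c) * \<rho>B l b' b
        + of_real (r l) * \<rho>AB l (a', b') (a, b) * \<rho>C l c' c)"
      using assms that unfolding tri_index_def by fast
    then show ?thesis unfolding f1_def f2_def f3_def by (simp add: sum_distrib_left algebra_simps)
  qed
  have "tri_prob d \<rho> MA NB NC = (\<Sum>t\<in>?T. \<Sum>t'\<in>?T. \<Sum>l<n.
      of_real (p l) * f1 l t t' + of_real (q l) * f2 l t t' + of_real (r l) * f3 l t t')"
    unfolding tri_prob_def tri_index_def
    by (intro sum.cong refl, clarify, intro sum.cong refl, clarify) (simp add: pointwise)
  also have "\<dots> = (\<Sum>l<n. of_real (p l) * (\<Sum>t\<in>?T. \<Sum>t'\<in>?T. f1 l t t')
      + of_real (q l) * (\<Sum>t\<in>?T. \<Sum>t'\<in>?T. f2 l t t') + of_real (r l) * (\<Sum>t\<in>?T. \<Sum>t'\<in>?T. f3 l t t'))"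
    by (simp add: sum.swap[of _ "{..<n}"] sum.distrib sum_distrib_left)
  finally show ?thesis
    unfolding f1_def f2_def f3_def
    by (simp only: split_def tri_sum_split_A_BC[unfolded split_def]
        tri_sum_split_AC_B[unfolded split_def] tri_sum_split_AB_C[unfolded split_def])
qed

lemma tri_prob_diff:
  "tri_prob d \<rho> (\<lambda>i j. A i j - A' i j) NB NC = tri_prob d \<rho> A NB NC - tri_prob d \<rho> A' NB NC"
  "tri_prob d \<rho> MA (\<lambda>i j. B i j - B' i j) NC = tri_prob d \<rho> MA B NC - tri_prob d \<rho> MA B' NC"
  "tri_prob d \<rho> MA NB (\<lambda>i j. C i j - C' i j) = tri_prob d \<rho> MA NB C - tri_prob d \<rho> MA NB C'"
  unfolding tri_prob_def by (simp_all add: split_def sum_subtractf[symmetric] algebra_simps)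

lemma tri_prob_povm_obs:
  "tri_prob d \<rho> (povm_obs MA) (povm_obs NB) (povm_obs NC) =
    (\<Sum>a\<in>{0, 1}. \<Sum>b\<in>{0, 1}. \<Sum>c\<in>{0, 1::nat}. (-1) ^ (a + b + c) * tri_prob d \<rho> (MA a) (NB b) (NC c))"
  unfolding povm_obs_def tri_prob_diff by (simp add: algebra_simps)

lemma alice_obs_eq_povm_obs: "alice_obs x = povm_obs (alice_proj x)"
  unfolding povm_obs_def alice_proj_def by (simp add: fun_eq_iff field_simps)

lemma mermin_comb_correlators:
  fixes V :: real and N N' :: "nat \<Rightarrow> nat \<Rightarrow> nat op"
  assumes prob: "\<forall>a\<in>{0,1}. \<forall>b\<in>{0,1}. \<forall>c\<in>{0,1}. \<forall>x\<in>{0,1}. \<forall>y\<in>{0,1}. \<forall>z\<in>{0,1}.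
             complex_of_real (mermin V a b c x y z) = tri_prob d \<rho> (alice_proj x a) (N y b) (N' z c)"
  shows "mermin_comb (\<lambda>x y z. tri_prob d \<rho> (alice_obs x) (povm_obs (N y)) (povm_obs (N' z)))
    = complex_of_real (4 * V)"
proof -
  define E where "E x y z = (\<Sum>a\<in>{0, 1}. \<Sum>b\<in>{0, 1}. \<Sum>c\<in>{0, 1::nat}.
      (-1) ^ (a + b + c) * mermin V a b c x y z)" for x y z
  have E: "tri_prob d \<rho> (alice_obs x) (povm_obs (N y)) (povm_obs (N' z)) = complex_of_real (E x y z)"
    if "x \<in> {0, 1}" "y \<in> {0, 1}" "z \<in> {0, 1}" for x y z
    unfolding E_def alice_obs_eq_povm_obs tri_prob_povm_obs
    using that by (simp add: prob[rule_format, THEN sym])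
  have "E 0 0 1 + E 0 1 0 + E 1 0 0 - E 1 1 1 = 4 * V"
    unfolding E_def by (simp add: mermin_def field_simps)
  then have "complex_of_real (E 0 0 1 + E 0 1 0 + E 1 0 0 - E 1 1 1) = complex_of_real (4 * V)"
    by simp
  then show ?thesis unfolding mermin_comb_def by (simp add: E)
qed

lemma biseparable_mermin_bound:
  fixes V :: real and N N' :: "nat \<Rightarrow> nat \<Rightarrow> nat op"
  assumes bisep: "biseparable d \<rho>"
    and N: "\<forall>y\<in>{0, 1}. povm2_on {0..<d} (N y)" and N': "\<forall>z\<in>{0, 1}. povm2_on {0..<d} (N' z)"
    and prob: "\<forall>a\<in>{0,1}. \<forall>b\<in>{0,1}. \<forall>c\<in>{0,1}. \<forall>x\<in>{0,1}. \<forall>y\<in>{0,1}. \<forall>z\<in>{0,1}.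
             complex_of_real (mermin V a b c x y z) = tri_prob d \<rho> (alice_proj x a) (N y b) (N' z c)"
  shows "V \<le> 1 / sqrt 2"
proof -
  let ?D = "{0..<d}"
  obtain n p q r \<rho>A \<rho>BC \<rho>AC \<rho>B \<rho>AB \<rho>C where
    w: "\<forall>l<(n::nat). 0 \<le> p l \<and> 0 \<le> q l \<and> 0 \<le> r l" and ws: "(\<Sum>l<n. p l + q l + r l) = 1"
    and st: "\<forall>l<n. state_on qubit (\<rho>A l) \<and> state_on (?D \<times> ?D) (\<rho>BC l) \<and>
              state_on (qubit \<times> ?D) (\<rho>AC l) \<and> state_on ?D (\<rho>B l) \<and>
              state_on (qubit \<times> ?D) (\<rho>AB l) \<and> state_on ?D (\<rho>C l)"
    and decomp: "\<forall>(a, b, c) \<in> tri_index d. \<forall>(a', b', c') \<in> tri_index d.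
          \<rho> (a, b, c) (a', b', c') =
            (\<Sum>l<n. of_real (p l) * \<rho>A l a a' * \<rho>BC l (b, c) (b', c')
                  + of_real (q l) * \<rho>AC l (a, c) (a', c') * \<rho>B l b b'
                  + of_real (r l) * \<rho>AB l (a, b) (a', b') * \<rho>C l c c')"
    using bisep unfolding biseparable_def by (elim exE conjE) (rule that, assumption+)
  have "complex_of_real (4 * V) = (\<Sum>l<n. of_real (p l) * mermin_comb (\<lambda>x y z. expect qubit (alice_obs x) (\<rho>A l)
      * expect (?D \<times> ?D) (tensor (povm_obs (N y)) (povm_obs (N' z))) (\<rho>BC l))
    + of_real (q l) * mermin_comb (\<lambda>x y z. expect (qubit \<times> ?D) (tensor (alice_obs x) (povm_obs (N' z))) (\<rho>AC l)
      * expect ?D (povm_obs (N y)) (\<rho>B l))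
    + of_real (r l) * mermin_comb (\<lambda>x y z. expect (qubit \<times> ?D) (tensor (alice_obs x) (povm_obs (N y))) (\<rho>AB l)
      * expect ?D (povm_obs (N' z)) (\<rho>C l)))"
    (is "_ = (\<Sum>l<n. of_real (p l) * ?XA l + of_real (q l) * ?XAC l + of_real (r l) * ?XAB l)")
    unfolding mermin_comb_correlators[OF prob, symmetric] mermin_comb_def tri_prob_biseparable[OF decomp]
      sum.distrib[symmetric] sum_subtractf[symmetric]
    by (intro sum.cong refl) (simp add: algebra_simps)
  then have "4 * V = Re (\<Sum>l<n. of_real (p l) * ?XA l + of_real (q l) * ?XAC l + of_real (r l) * ?XAB l)"
    by (metis Re_complex_of_real)
  also have "\<dots> = (\<Sum>l<n. p l * Re (?XA l) + q l * Re (?XAC l) + r l * Re (?XAB l))"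
    by simp
  also have "\<dots> \<le> (\<Sum>l<n. (p l + q l + r l) * (2 * sqrt 2))"
  proof (rule sum_mono)
    fix l assume "l \<in> {..<n}"
    then have l: "0 \<le> p l" "0 \<le> q l" "0 \<le> r l" "state_on qubit (\<rho>A l)" "state_on (?D \<times> ?D) (\<rho>BC l)"
      "state_on (qubit \<times> ?D) (\<rho>AC l)" "state_on ?D (\<rho>B l)"
      "state_on (qubit \<times> ?D) (\<rho>AB l)" "state_on ?D (\<rho>C l)"
      using w st by auto
    have "Re (?XA l) \<le> 2 * sqrt 2" "Re (?XAC l) \<le> 2 * sqrt 2" "Re (?XAB l) \<le> 2 * sqrt 2"
      \<comment> \<open>\<open>AC|B\<close> is \<open>AB|C\<close> with Bob and Charlie exchanged, the combination being symmetric in \<open>y, z\<close>\<close>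
      using expect_A_BC_mermin_bound[OF _ _ N N' l(4,5)] expect_AB_C_mermin_bound[OF _ _ N' N l(6,7)]
        expect_AB_C_mermin_bound[OF _ _ N N' l(8,9)]
        mermin_comb_swap[of "\<lambda>x y z. expect (qubit \<times> ?D) (tensor (alice_obs x) (povm_obs (N' y))) (\<rho>AC l)
          * expect ?D (povm_obs (N z)) (\<rho>B l)"]
      by simp_all
    with l(1-3) show "p l * Re (?XA l) + q l * Re (?XAC l) + r l * Re (?XAB l) \<le> (p l + q l + r l) * (2 * sqrt 2)"
      by (simp add: distrib_right add_mono mult_left_mono)
  qed
  also have "\<dots> = 2 * sqrt 2" using ws by (simp flip: sum_distrib_right)
  finally have "4 * V \<le> 2 * sqrt 2" .
  moreover have "1 / sqrt 2 = 2 * sqrt 2 / 4" by (simp add: field_simps)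
  ultimately show ?thesis by linarith
qed

lemma mermin_steering_above_threshold:
  assumes "1 / sqrt 2 < V"
  shows "genuine_tripartite_steering_2SDI (mermin V)"
  unfolding genuine_tripartite_steering_2SDI_def
proof
  assume "\<exists>d \<rho> N N'. 1 \<le> d \<and> biseparable d \<rho> \<and>
      (\<forall>y\<in>{0, 1}. povm2_on {0..<d} (N y)) \<and> (\<forall>z\<in>{0, 1}. povm2_on {0..<d} (N' z)) \<and>
      (\<forall>a\<in>{0,1}. \<forall>b\<in>{0,1}. \<forall>c\<in>{0,1}. \<forall>x\<in>{0,1}. \<forall>y\<in>{0,1}. \<forall>z\<in>{0,1}.
         complex_of_real (mermin V a b c x y z) = tri_prob d \<rho> (alice_proj x a) (N y b) (N' z c))"
  then have "V \<le> 1 / sqrt 2" using biseparable_mermin_bound by blast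
  with assms show False by simp
qed

section \<open>A biseparable model for \<open>V \<le> 1/\<surd>2\<close>\<close>

definition diag_op :: "('i \<Rightarrow> real) \<Rightarrow> 'i op" where
  "diag_op f = (\<lambda>i j. if i = j then complex_of_real (f i) else 0)"

lemma qform_diag_op:
  assumes "finite I"
  shows "qform I (diag_op f) v = complex_of_real (\<Sum>i\<in>I. f i * (cmod (v i))\<^sup>2)"
proof -
  have "qform I (diag_op f) v = (\<Sum>i\<in>I. cnj (v i) * complex_of_real (f i) * v i)"
    unfolding qform_def diag_op_def using assms
    by (intro sum.cong refl) (simp add: if_distrib if_distribR cong: if_cong)
  also have "\<dots> = (\<Sum>i\<in>I. complex_of_real (f i * (cmod (v i))\<^sup>2))"
    by (intro sum.cong refl) (simp add: cnj_mult_self[symmetric] mult_ac del: of_real_power)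
  finally show ?thesis by simp
qed

lemma psd_on_diag_op: "finite I \<Longrightarrow> (\<And>i. i \<in> I \<Longrightarrow> 0 \<le> f i) \<Longrightarrow> psd_on I (diag_op f)"
  unfolding psd_on_def by (simp add: qform_diag_op sum_nonneg)

lemma trace_diag_op: "trace_on I (diag_op f) = complex_of_real (\<Sum>i\<in>I. f i)"
  unfolding trace_on_def diag_op_def by simp

lemma expect_diag_op:
  "finite I \<Longrightarrow> expect I T (diag_op f) = (\<Sum>i\<in>I. T i i * complex_of_real (f i))"
  unfolding expect_def diag_op_def by (intro sum.cong refl) (simp add: if_distrib if_distribR cong: if_cong)

text \<open>Charlie holds a classical register
  \<open>l \<in> {0..3}\<close> and outputs its bit \<open>z\<close>; Bob measures a qubit embedded in his first two levels
  exactly as Alice does, and answers \<open>0\<close> on the other two levels.\<close>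

definition charlie_bit :: "nat \<Rightarrow> nat \<Rightarrow> nat" where
  "charlie_bit z l = (if z = 0 then l mod 2 else l div 2 mod 2)"

definition model_charlie :: "nat \<Rightarrow> nat \<Rightarrow> nat op" where
  "model_charlie z c = diag_op (\<lambda>l. if charlie_bit z l = c then 1 else 0)"

definition model_bob :: "nat \<Rightarrow> nat \<Rightarrow> nat op" where
  "model_bob y b i j = (if i < 2 \<and> j < 2 then alice_proj y b i j else if i = j \<and> b = 0 then 1 else 0)"

text \<open>Conditioned on \<open>l\<close>, Alice and Bob share \<open>|00\<rangle>/\<surd>2 + (s\<^sub>1 + i s\<^sub>0)/2 |11\<rangle>\<close> with the signs
  \<open>s\<^sub>z = (-1)\<^bsup>c\<^sub>z\<^esup>\<close> of the bits \<open>c\<^sub>z\<close> of \<open>l\<close>; its correlators \<open>\<langle>A\<^sub>x B\<^sub>y\<rangle> = model_corr s\<^sub>0 s\<^sub>1 x y\<close>,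
  weighted by Charlie's outcome, reproduce \<open>P\<^sup>V\<^sub>M\<^sub>F\<close> at \<open>V = 1/\<surd>2\<close>.\<close>

definition model_sign :: "nat \<Rightarrow> nat \<Rightarrow> real" where
  "model_sign z l = (-1) ^ charlie_bit z l"

definition model_psi :: "real \<Rightarrow> real \<Rightarrow> nat \<times> nat \<Rightarrow> complex" where
  "model_psi s\<^sub>0 s\<^sub>1 = (\<lambda>k. if k = (0, 0) then complex_of_real (1 / sqrt 2)
      else if k = (1, 1) then (complex_of_real s\<^sub>1 + \<i> * complex_of_real s\<^sub>0) / 2 else 0)"

definition model_corr :: "real \<Rightarrow> real \<Rightarrow> nat \<Rightarrow> nat \<Rightarrow> real" where
  "model_corr s\<^sub>0 s\<^sub>1 x y = (if x = 0 \<and> y = 0 then s\<^sub>1 else if x = 1 \<and> y = 1 then - s\<^sub>1 else s\<^sub>0) / sqrt 2"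

lemma lessThan_4_eq: "{0..<4::nat} = {0, 1, 2, 3}" "{..<4::nat} = {0, 1, 2, 3}"
  by auto

lemma model_sign_cases: "model_sign z l \<in> {1, -1}"
proof -
  have "charlie_bit z l = 0 \<or> charlie_bit z l = 1" unfolding charlie_bit_def by auto
  then show ?thesis unfolding model_sign_def by auto
qed

lemma psd_on_model_bob:
  assumes "y \<in> {0, 1}" "b \<in> {0, 1}"
  shows "psd_on {0..<4} (model_bob y b)"
proof (rule psd_on_cong)
  define e where "e = (\<lambda>i :: nat. if i = 0 then 1 else if i = 1 then (if y = 0 then (-1) ^ b else \<i> * (-1) ^ b) else 0 :: complex)"
  show "psd_on {0..<4} (\<lambda>i j. complex_of_real (1 / 2) * rank1 e i j
      + diag_op (\<lambda>i. if b = 0 \<and> (2::nat) \<le> i then 1 else 0) i j)"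
    by (intro psd_on_add psd_on_scale psd_on_rank1 psd_on_diag_op) auto
  fix i j :: nat assume "i \<in> {0..<4}" "j \<in> {0..<4}"
  then show "model_bob y b i j = complex_of_real (1 / 2) * rank1 e i j
      + diag_op (\<lambda>i. if b = 0 \<and> (2::nat) \<le> i then 1 else 0) i j"
    using assms unfolding lessThan_4_eq
    by (auto simp: model_bob_def rank1_def e_def diag_op_def alice_proj_def alice_obs_def
        sigma_x_def sigma_y_def)
qed

lemma povm2_on_model_bob:
  assumes "y \<in> {0, 1}"
  shows "povm2_on {0..<4} (model_bob y)"
  unfolding povm2_on_def
proof (intro conjI ballI)
  show "psd_on {0..<4} (model_bob y 0)" "psd_on {0..<4} (model_bob y 1)"
    using psd_on_model_bob assms by auto
  fix i j :: nat assume "i \<in> {0..<4}" "j \<in> {0..<4}"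
  show "model_bob y 0 i j + model_bob y 1 i j = (if i = j then 1 else 0)"
    unfolding model_bob_def alice_proj_def by (auto simp: field_simps)
qed

lemma povm2_on_model_charlie: "povm2_on {0..<4} (model_charlie z)"
  unfolding povm2_on_def model_charlie_def
proof (intro conjI ballI)
  show "psd_on {0..<4} (diag_op (\<lambda>l. if charlie_bit z l = 0 then 1 else 0))"
    "psd_on {0..<4} (diag_op (\<lambda>l. if charlie_bit z l = 1 then 1 else 0))"
    by (auto intro!: psd_on_diag_op)
  fix i j :: nat assume "i \<in> {0..<4}" "j \<in> {0..<4}"
  have "charlie_bit z i = 0 \<or> charlie_bit z i = 1" unfolding charlie_bit_def by auto
  then show "diag_op (\<lambda>l. if charlie_bit z l = 0 then 1 else 0) i j
      + diag_op (\<lambda>l. if charlie_bit z l = 1 then 1 else 0) i j = (if i = j then 1 else 0)"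
    unfolding diag_op_def by auto
qed

definition model_\<rho>A :: "nat op" where "model_\<rho>A = diag_op (\<lambda>_. 1 / 2)"
definition model_\<rho>BC :: "(nat \<times> nat) op" where
  "model_\<rho>BC = diag_op (\<lambda>(b, c). if b < 2 then 1 / 8 else 0)"
definition model_\<rho>AB :: "nat \<Rightarrow> (nat \<times> nat) op" where
  "model_\<rho>AB l = rank1 (model_psi (model_sign 0 l) (model_sign 1 l))"
definition model_\<rho>C :: "nat \<Rightarrow> nat op" where "model_\<rho>C l = diag_op (\<lambda>i. if i = l then 1 else 0)"

lemma state_on_model_\<rho>A: "state_on qubit model_\<rho>A"
  unfolding state_on_def model_\<rho>A_def by (auto intro!: psd_on_diag_op simp: trace_diag_op qubit_def)

lemma state_on_model_\<rho>BC: "state_on ({0..<4} \<times> {0..<4}) model_\<rho>BC"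
  unfolding state_on_def model_\<rho>BC_def
  by (auto intro!: psd_on_diag_op simp: trace_diag_op sum.cartesian_product' lessThan_4_eq)

lemma state_on_model_\<rho>C:
  assumes "l < 4"
  shows "state_on {0..<4} (model_\<rho>C l)"
proof -
  have "(\<Sum>i\<in>{0..<4}. if i = l then 1 else (0::real)) = 1" using assms by (simp add: sum.delta)
  then show ?thesis unfolding state_on_def model_\<rho>C_def by (auto intro!: psd_on_diag_op simp: trace_diag_op)
qed

lemma state_on_model_\<rho>AB: "state_on (qubit \<times> {0..<4}) (model_\<rho>AB l)"
proof -
  have "sqnorm (qubit \<times> {0..<4}) (model_psi s\<^sub>0 s\<^sub>1) = 1" if "s\<^sub>0 \<in> {1, -1}" "s\<^sub>1 \<in> {1, -1}" for s\<^sub>0 s\<^sub>1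
    unfolding sqnorm_def sum.cartesian_product' qubit_eq lessThan_4_eq model_psi_def using that
    by (auto simp: cmod_def power2_eq_square power_divide)
  then show ?thesis unfolding state_on_def model_\<rho>AB_def
    using model_sign_cases by (simp add: psd_on_rank1 trace_rank1)
qed

lemma expect_model_\<rho>A: "expect qubit (alice_proj x a) model_\<rho>A = 1 / 2"
  unfolding model_\<rho>A_def expect_diag_op[OF finite_qubit] unfolding qubit_eq
  by (simp add: alice_proj_def alice_obs_def sigma_x_def sigma_y_def field_simps)

lemma expect_model_\<rho>BC:
  assumes "y \<in> {0, 1}" "b \<in> {0, 1}" "c \<in> {0, 1}"
  shows "expect ({0..<4} \<times> {0..<4}) (tensor (model_bob y b) (model_charlie z c)) model_\<rho>BC = 1 / 4"
  unfolding model_\<rho>BC_def expect_diag_op[OF finite_cartesian_product[OF finite_atLeastLessThan finite_atLeastLessThan]]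
  unfolding sum.cartesian_product' lessThan_4_eq
  using assms
  by (auto simp: tensor_def model_bob_def model_charlie_def diag_op_def charlie_bit_def alice_proj_def
      alice_obs_def sigma_x_def sigma_y_def field_simps)

lemma expect_model_\<rho>C:
  assumes "l < 4"
  shows "expect {0..<4} (model_charlie z c) (model_\<rho>C l) = (if charlie_bit z l = c then 1 else 0)"
proof -
  have "expect {0..<4} (model_charlie z c) (model_\<rho>C l)
      = (\<Sum>i\<in>{0..<4}. if i = l then model_charlie z c i i else 0)"
    unfolding model_\<rho>C_def expect_diag_op[OF finite_atLeastLessThan] by (intro sum.cong refl) auto
  also have "\<dots> = model_charlie z c l l" using assms by (simp add: sum.delta)
  finally show ?thesis by (simp add: model_charlie_def diag_op_def)
qed

lemma expect_tensor_model_psi: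
  assumes "s\<^sub>0 \<in> {1, -1}" "s\<^sub>1 \<in> {1, -1}" "x \<in> {0, 1}" "y \<in> {0, 1}" "a \<in> {0, 1}" "b \<in> {0, 1}"
  shows "expect (qubit \<times> {0..<4}) (tensor (alice_proj x a) (model_bob y b)) (rank1 (model_psi s\<^sub>0 s\<^sub>1))
       = complex_of_real ((1 + (-1) ^ (a + b) * model_corr s\<^sub>0 s\<^sub>1 x y) / 4)"
proof -
  have two: "(0::nat, 0::nat) \<in> qubit \<times> {0..<4}" "(1::nat, 1::nat) \<in> qubit \<times> {0..<4}"
    "(0::nat, 0::nat) \<noteq> (1, 1)"
    by (auto simp: qubit_def)
  have fin: "finite (qubit \<times> {0..<4::nat})" by (simp add: qubit_def)
  have s2: "sqrt 2 * sqrt 2 = (2::real)" "\<And>z. sqrt 2 * (sqrt 2 * z) = (2::real) * z"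
    by (simp_all add: mult.assoc[symmetric])
  show ?thesis
    unfolding expect_rank1 model_psi_def qform_two_point[OF fin two]
    using assms
    by (auto simp: s2 qubit_def tensor_def model_bob_def alice_proj_def alice_obs_def sigma_x_def
        sigma_y_def model_corr_def complex_eq_iff field_simps power2_eq_square)
qed

definition model_state :: "real \<Rightarrow> (nat \<times> nat \<times> nat) op" where
  "model_state V = (\<lambda>(a, b, c) (a', b', c'). \<Sum>l<4.
      complex_of_real ((1 - sqrt 2 * V) / 4) * model_\<rho>A a a' * model_\<rho>BC (b, c) (b', c')
    + complex_of_real (sqrt 2 * V / 4) * model_\<rho>AB l (a, b) (a', b') * model_\<rho>C l c c')"

lemma model_state_decomposition:
  "\<forall>(a, b, c) \<in> tri_index 4. \<forall>(a', b', c') \<in> tri_index 4. model_state V (a, b, c) (a', b', c') =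
    (\<Sum>l<4. complex_of_real ((1 - sqrt 2 * V) / 4) * model_\<rho>A a a' * model_\<rho>BC (b, c) (b', c')
      + complex_of_real 0 * model_\<rho>AB l (a, c) (a', c') * model_\<rho>C l b b'
      + complex_of_real (sqrt 2 * V / 4) * model_\<rho>AB l (a, b) (a', b') * model_\<rho>C l c c')"
  by (simp add: model_state_def)

lemma biseparable_model_state:
  assumes "0 \<le> V" "V \<le> 1 / sqrt 2"
  shows "biseparable 4 (model_state V)"
proof -
  have weights: "0 \<le> (1 - sqrt 2 * V) / 4" "0 \<le> sqrt 2 * V / 4"
    using assms by (simp_all add: field_simps)
  show ?thesis
    unfolding biseparable_def
    by (rule exI[of _ 4], rule exI[of _ "\<lambda>_. (1 - sqrt 2 * V) / 4"], rule exI[of _ "\<lambda>_. 0"],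
        rule exI[of _ "\<lambda>_. sqrt 2 * V / 4"], rule exI[of _ "\<lambda>_. model_\<rho>A"], rule exI[of _ "\<lambda>_. model_\<rho>BC"],
        rule exI[of _ model_\<rho>AB], rule exI[of _ model_\<rho>C], rule exI[of _ model_\<rho>AB], rule exI[of _ model_\<rho>C],
        intro conjI)
      (use weights in simp, simp add: field_simps,
        simp add: state_on_model_\<rho>A state_on_model_\<rho>BC state_on_model_\<rho>AB state_on_model_\<rho>C,
        rule model_state_decomposition)
qed

lemma mermin_model_decomposition:
  assumes "a \<in> {0,1}" "b \<in> {0,1}" "c \<in> {0,1}" "x \<in> {0,1}" "y \<in> {0,1}" "z \<in> {0,1}"
  shows "mermin V a b c x y z = (\<Sum>l<4. (1 - sqrt 2 * V) / 4 * (1 / 2 * (1 / 4)) + sqrt 2 * V / 4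
      * ((1 + (-1) ^ (a + b) * model_corr (model_sign 0 l) (model_sign 1 l) x y) / 4
        * (if charlie_bit z l = c then 1 else 0)))"
proof -
  have s2: "sqrt 2 * (sqrt 2 * t) = 2 * t" for t :: real
    by (simp add: mult.assoc[symmetric])
  show ?thesis
    using assms unfolding lessThan_4_eq
    by (auto simp: mermin_def model_corr_def model_sign_def charlie_bit_def field_simps s2)
qed

lemma tri_prob_model_state:
  assumes "a \<in> {0,1}" "b \<in> {0,1}" "c \<in> {0,1}" "x \<in> {0,1}" "y \<in> {0,1}" "z \<in> {0,1}"
  shows "tri_prob 4 (model_state V) (alice_proj x a) (model_bob y b) (model_charlie z c)
    = complex_of_real (mermin V a b c x y z)"
proof -
  have "tri_prob 4 (model_state V) (alice_proj x a) (model_bob y b) (model_charlie z c) = (\<Sum>l<4.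
      complex_of_real ((1 - sqrt 2 * V) / 4) * (1 / 2 * (1 / 4)) + complex_of_real (sqrt 2 * V / 4)
      * (complex_of_real ((1 + (-1) ^ (a + b) * model_corr (model_sign 0 l) (model_sign 1 l) x y) / 4)
        * (if charlie_bit z l = c then 1 else 0)))"
    unfolding tri_prob_biseparable[OF model_state_decomposition] model_\<rho>AB_def
    using assms model_sign_cases lessThan_4_eq(2)
    by (simp add: expect_model_\<rho>A expect_model_\<rho>BC expect_tensor_model_psi expect_model_\<rho>C)
  also have "\<dots> = complex_of_real (mermin V a b c x y z)"
    unfolding mermin_model_decomposition[OF assms] by (simp add: lessThan_4_eq)
  finally show ?thesis .
qed

lemma mermin_not_steering_below_threshold:
  assumes "0 \<le> V" "V \<le> 1 / sqrt 2"
  shows "\<not> genuine_tripartite_steering_2SDI (mermin V)"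
  unfolding genuine_tripartite_steering_2SDI_def not_not
  by (rule exI[of _ 4], rule exI[of _ "model_state V"], rule exI[of _ model_bob], rule exI[of _ model_charlie])
    (use biseparable_model_state[OF assms] tri_prob_model_state povm2_on_model_bob povm2_on_model_charlie
      in auto)

theorem proposition7:
  fixes V :: real
  assumes "0 < V" and "V \<le> 1"
  shows "genuine_tripartite_steering_2SDI (mermin V) \<longleftrightarrow> V > 1 / sqrt 2"
  using mermin_not_steering_below_threshold[of V] mermin_steering_above_threshold[of V] assms(1)
  by (cases "1 / sqrt 2 < V") auto

end
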